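(* Assume the setting and algorithm described in the context. If $0<\alpha\le\frac{\sqrt n}{\sqrt{8m}\,L}$, then for all $k\ge0$, almost surely, $$\mathbb E\big[t^{k+1}\,|\,\mathcal F^k\big]\le\Big(1-\frac1{4m}\Big)t^k+16m\alpha^2L\big(F(\bar x^k)-F^*\big)+\Big(8m\alpha^2L^2+\frac9{4m}\Big)\frac1n\|x^k-Jx^k\|^2 .$$
   Context: Setting. Let $n,m,p\ge1$ be integers and $\mathcal V=\{1,\dots,n\}$. For each $i\in\mathcal V$ and $j\in\{1,\dots,m\}$, $f_{i,j}:\mathbb R^p\to\mathbb R$ is differentiable and $L$-smooth for some $L>0$, i.e. $\|\nabla f_{i,j}(x)-\nabla f_{i,j}(y)\|\le L\|x-y\|$ for all $x,y\in\mathbb R^p$. Let $f_i:=\frac1m\sum_{j=1}^m f_{i,j}$ and $F:=\frac1n\sum_{i=1}^n f_i$, and assume $F^*:=\inf_{x\in\mathbb R^p}F(x)>-\infty$. Let $\underline W=(\underline w_{ir})\in\mathbb R^{n\times n}$ be a nonnegative, primitive, doubly stochastic matrix ($\underline W\mathbf 1_n=\mathbf 1_n$, $\mathbf 1_n^\top\underline W=\mathbf 1_n^\top$), and let $\lambda\in[0,1)$ be its second largest singular value. Any expression with $\lambda$ in a denominator is read as $+\infty$ when $\lambda=0$. Algorithm GT-SAGA with step-size $\alpha>0$: fix a deterministic $\bar x^0\in\mathbb R^p$; for all $i\in\mathcal V$ set $x_i^0=\bar x^0$, $z_{i,j}^0=x_i^0$ for all $j$, $y_i^0=0$, $g_i^{-1}=0$.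 For $k=0,1,2,\dots$ and every $i\in\mathcal V$: draw $\tau_i^k$ uniformly from $\{1,\dots,m\}$; set $g_i^k=\nabla f_{i,\tau_i^k}(x_i^k)-\nabla f_{i,\tau_i^k}(z_{i,\tau_i^k}^k)+\frac1m\sum_{j=1}^m\nabla f_{i,j}(z_{i,j}^k)$; set $y_i^{k+1}=\sum_{r=1}^n\underline w_{ir}(y_r^k+g_r^k-g_r^{k-1})$; set $x_i^{k+1}=\sum_{r=1}^n\underline w_{ir}(x_r^k-\alpha y_r^{k+1})$; draw $s_i^k$ uniformly from $\{1,\dots,m\}$; set $z_{i,j}^{k+1}=x_i^k$ if $j=s_i^k$ and $z_{i,j}^{k+1}=z_{i,j}^k$ otherwise. The family $\{\tau_i^k,s_i^k: i\in\mathcal V,k\ge0\}$ is independent. Notation. $x^k,y^k,g^k\in\mathbb R^{np}$ stack the $x_i^k$, $y_i^k$, $g_i^k$; $\nabla\mathbf f(x^k)\in\mathbb R^{np}$ stacks $\nabla f_i(x_i^k)$, $i=1,\dots,n$; $W=\underline W\otimes I_p$, $J=(\frac1n\mathbf 1_n\mathbf 1_n^\top)\otimes I_p$; $\bar x^k=\frac1n\sum_i x_i^k$, $\bar g^k=\frac1n\sum_i g_i^k$, $\overline{\nabla\mathbf f}(x^k)=\frac1n\sum_i\nabla f_i(x_i^k)$. $\mathcal F^0$ is the trivial $\sigma$-algebra and $\mathcal F^k=\sigma(\{\tau_i^t,s_i^t:i\in\mathcal V,\ t\le k-1\})$ for $k\ge1$. $t^k:=\frac1n\sum_{i=1}^n\frac1m\sum_{j=1}^m\|\bar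 x^k-z_{i,j}^k\|^2$. $\|\nabla\mathbf f(x^0)\|^2:=\sum_{i=1}^n\|\nabla f_i(\bar x^0)\|^2$. Norms are Euclidean (spectral for matrices); vector and matrix inequalities are entrywise. *)

theory Defs
  imports "HOL-Probability.Probability"
begin

text \<open>Nodes are indexed by 1..n, component functions by 1..m.
  A mixing matrix is a function W :: nat => nat => real restricted to 1..n.\<close>

primrec matpow :: "(nat \<Rightarrow> nat \<Rightarrow> real) \<Rightarrow> nat \<Rightarrow> nat \<Rightarrow> nat \<Rightarrow> nat \<Rightarrow> real" where
  "matpow W n 0 = (\<lambda>i j. if i = j then 1 else 0)"
| "matpow W n (Suc q) = (\<lambda>i j. \<Sum>l\<in>{1..n}. matpow W n q i l * W l j)"

definition doubly_stochastic :: "(nat \<Rightarrow> nat \<Rightarrow> real) \<Rightarrow> nat \<Rightarrow> bool" where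
  "doubly_stochastic W n \<longleftrightarrow>
     (\<forall>i\<in>{1..n}. \<forall>r\<in>{1..n}. W i r \<ge> 0) \<and>
     (\<forall>i\<in>{1..n}. (\<Sum>r\<in>{1..n}. W i r) = 1) \<and>
     (\<forall>r\<in>{1..n}. (\<Sum>i\<in>{1..n}. W i r) = 1)"

definition primitive :: "(nat \<Rightarrow> nat \<Rightarrow> real) \<Rightarrow> nat \<Rightarrow> bool" where
  "primitive W n \<longleftrightarrow> (\<exists>q\<ge>1. \<forall>i\<in>{1..n}. \<forall>r\<in>{1..n}. matpow W n q i r > 0)"

text \<open>GT-SAGA state after k iterations, as a deterministic function of the sampled
  indices tau k i (= tau_i^k) and s k i (= s_i^k).
  The state is (x^k, y^k, g^{k-1}, z^k); df i j is the gradient of f_{i,j}.\<close>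

primrec gt_saga ::
  "(nat \<Rightarrow> nat \<Rightarrow> real) \<Rightarrow> (nat \<Rightarrow> nat \<Rightarrow> 'v::real_normed_vector \<Rightarrow> 'v) \<Rightarrow> nat \<Rightarrow> nat \<Rightarrow> real \<Rightarrow> 'v
   \<Rightarrow> (nat \<Rightarrow> nat \<Rightarrow> nat) \<Rightarrow> (nat \<Rightarrow> nat \<Rightarrow> nat) \<Rightarrow> nat
   \<Rightarrow> (nat \<Rightarrow> 'v) \<times> (nat \<Rightarrow> 'v) \<times> (nat \<Rightarrow> 'v) \<times> (nat \<Rightarrow> nat \<Rightarrow> 'v)" where
  "gt_saga W df n m \<alpha> x0 tau s 0 = ((\<lambda>i. x0), (\<lambda>i. 0), (\<lambda>i. 0), (\<lambda>i j. x0))"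
| "gt_saga W df n m \<alpha> x0 tau s (Suc k) =
     (case gt_saga W df n m \<alpha> x0 tau s k of (x, y, gp, z) \<Rightarrow>
       let g = (\<lambda>i. df i (tau k i) (x i) - df i (tau k i) (z i (tau k i))
                    + (1 / real m) *\<^sub>R (\<Sum>j\<in>{1..m}. df i j (z i j)));
           y' = (\<lambda>i. \<Sum>r\<in>{1..n}. W i r *\<^sub>R (y r + g r - gp r));
           x' = (\<lambda>i. \<Sum>r\<in>{1..n}. W i r *\<^sub>R (x r - \<alpha> *\<^sub>R y' r));
           z' = (\<lambda>i j. if j = s k i then x i else z i j)
       in (x', y', g, z'))"

definition gt_x where "gt_x W df n m \<alpha> x0 tau s k = fst (gt_saga W df n m \<alpha> x0 tau s k)"
definition gt_z where "gt_z W df n m \<alpha> x0 tau s k = snd (snd (snd (gt_saga W df n m \<alpha> x0 tau s k)))"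

definition avg :: "nat \<Rightarrow> (nat \<Rightarrow> 'v::real_vector) \<Rightarrow> 'v" where
  "avg n x = (1 / real n) *\<^sub>R (\<Sum>i\<in>{1..n}. x i)"

definition tval :: "nat \<Rightarrow> nat \<Rightarrow> (nat \<Rightarrow> 'v::real_normed_vector) \<Rightarrow> (nat \<Rightarrow> nat \<Rightarrow> 'v) \<Rightarrow> real" where
  "tval n m x z = (1 / real n) * (\<Sum>i\<in>{1..n}. (1 / real m) * (\<Sum>j\<in>{1..m}. (norm (avg n x - z i j))\<^sup>2))"

text \<open>||x - J x||^2 = sum_i ||x_i - xbar||^2\<close>
definition cons_err :: "nat \<Rightarrow> (nat \<Rightarrow> 'v::real_normed_vector) \<Rightarrow> real" where
  "cons_err n x = (\<Sum>i\<in>{1..n}. (norm (x i - avg n x))\<^sup>2)"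

definition filt :: "'a measure \<Rightarrow> (nat \<Rightarrow> nat \<Rightarrow> 'a \<Rightarrow> nat) \<Rightarrow> (nat \<Rightarrow> nat \<Rightarrow> 'a \<Rightarrow> nat) \<Rightarrow> nat \<Rightarrow> nat \<Rightarrow> 'a measure" where
  "filt M tau s n k = sigma (space M)
     (\<Union>t\<in>{..<k}. \<Union>i\<in>{1..n}. {tau t i -` A \<inter> space M | A. True} \<union> {s t i -` A \<inter> space M | A. True})"

end

theory Submission
  imports Defs
begin

(* Conditioned on F^k the state of GT-SAGA is fixed, and the only randomness in the next step
   is the 2n fresh indices tau_i^k, s_i^k. They are uniform and independent of F^k, so the
   conditional expectation of t^(k+1) is the plain average over the m^(2n) index choices.
   Since W is column stochastic and the y-variables track the gradient estimates, the mean
   iterate moves by -alpha times the mean SAGA estimator. Averaging over the table indices s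
   keeps a (1 - 1/m) share of the table error and replaces the rest by distances to the
   current iterates; averaging over tau splits the mean estimator into the mean local gradient h
   plus centred noise whose variance is at most (2 L^2 / n) (t^k + ||x - Jx||^2 / n) by
   L-smoothness. The descent lemma gives ||h||^2 <= 8 L (F(xbar) - inf F) + 2 L^2 ||x - Jx||^2 / n,
   and Young's inequality with weight 1/(2m) together with alpha^2 8 m L^2 <= n yields the
   contraction factor 1 - 1/(4m). *)

section \<open>Sums over independent uniform choices\<close>

lemma sum_PiE_fun_upd:
  assumes "i \<in> I" "finite I"
  shows "(\<Sum>a\<in>PiE I (\<lambda>_. S). \<Phi> a) = (\<Sum>c\<in>S. \<Sum>g\<in>PiE (I-{i}) (\<lambda>_. S). \<Phi> (g(i:=c)))"
proof -
  have I: "I = insert i (I-{i})" using assms by auto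
  have "PiE I (\<lambda>_. S) = (\<lambda>(y, g). g(i := y)) ` (S \<times> PiE (I-{i}) (\<lambda>_. S))"
    by (subst I, subst PiE_insert_eq) simp
  moreover have "inj_on (\<lambda>(y, g). g(i := y)) (S \<times> PiE (I-{i}) (\<lambda>_. S))"
    using inj_combinator[of i "I-{i}" "\<lambda>_. S"] by simp
  ultimately have "(\<Sum>a\<in>PiE I (\<lambda>_. S). \<Phi> a)
      = (\<Sum>p\<in>S \<times> PiE (I-{i}) (\<lambda>_. S). \<Phi> ((\<lambda>(y, g). g(i := y)) p))"
    by (simp add: sum.reindex)
  also have "\<dots> = (\<Sum>c\<in>S. \<Sum>g\<in>PiE (I-{i}) (\<lambda>_. S). \<Phi> (g(i:=c)))"
    by (simp add: sum.cartesian_product split_def)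
  finally show ?thesis .
qed

lemma sum_PiE_coordinate:
  fixes \<phi> :: "'b \<Rightarrow> 'c::real_vector"
  assumes "i \<in> I" "finite I"
  shows "(\<Sum>a\<in>PiE I (\<lambda>_. S). \<phi> (a i)) = real (card S ^ (card I - 1)) *\<^sub>R (\<Sum>c\<in>S. \<phi> c)"
proof -
  have "(\<Sum>a\<in>PiE I (\<lambda>_. S). \<phi> (a i)) = (\<Sum>c\<in>S. \<Sum>g\<in>PiE (I-{i}) (\<lambda>_. S). \<phi> c)"
    by (subst sum_PiE_fun_upd[OF assms]) simp
  also have "\<dots> = (\<Sum>c\<in>S. real (card (PiE (I-{i}) (\<lambda>_. S))) *\<^sub>R \<phi> c)"
    by (simp add: sum_constant_scaleR)
  also have "card (PiE (I-{i}) (\<lambda>_. S)) = card S ^ (card I - 1)"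
    using assms by (simp add: card_PiE)
  finally show ?thesis by (simp add: scaleR_sum_right)
qed

lemma sum_PiE_inner_centered_coordinates:
  fixes u v :: "'b \<Rightarrow> 'v::real_inner"
  assumes "i \<in> I" "l \<in> I" "i \<noteq> l" "finite I" "(\<Sum>c\<in>S. u c) = 0"
  shows "(\<Sum>a\<in>PiE I (\<lambda>_. S). u (a i) \<bullet> v (a l)) = 0"
proof -
  have "(\<Sum>a\<in>PiE I (\<lambda>_. S). u (a i) \<bullet> v (a l))
     = (\<Sum>c\<in>S. \<Sum>g\<in>PiE (I-{i}) (\<lambda>_. S). u c \<bullet> v (g l))"
    by (subst sum_PiE_fun_upd[OF assms(1,4)]) (use assms in simp)
  also have "\<dots> = (\<Sum>g\<in>PiE (I-{i}) (\<lambda>_. S). (\<Sum>c\<in>S. u c) \<bullet> v (g l))"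
    by (subst sum.swap) (simp add: inner_sum_left)
  finally show ?thesis using assms by simp
qed

lemma sum_PiE_power2_norm_sum_centered:
  fixes e :: "'i \<Rightarrow> 'b \<Rightarrow> 'v::real_inner"
  assumes "finite I" "\<And>i. i \<in> I \<Longrightarrow> (\<Sum>c\<in>S. e i c) = 0"
  shows "(\<Sum>a\<in>PiE I (\<lambda>_. S). (norm (\<Sum>i\<in>I. e i (a i)))\<^sup>2)
       = real (card S ^ (card I - 1)) * (\<Sum>i\<in>I. \<Sum>c\<in>S. (norm (e i c))\<^sup>2)"
proof -
  have "(\<Sum>a\<in>PiE I (\<lambda>_. S). (norm (\<Sum>i\<in>I. e i (a i)))\<^sup>2)
     = (\<Sum>i\<in>I. \<Sum>l\<in>I. \<Sum>a\<in>PiE I (\<lambda>_. S). e i (a i) \<bullet> e l (a l))"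
    by (simp add: power2_norm_eq_inner inner_sum_left inner_sum_right sum.swap[of _ "PiE I (\<lambda>_. S)"] inner_commute)
  also have "\<dots> = (\<Sum>i\<in>I. \<Sum>a\<in>PiE I (\<lambda>_. S). e i (a i) \<bullet> e i (a i))"
  proof (rule sum.cong[OF refl])
    fix i assume i: "i \<in> I"
    have "(\<Sum>l\<in>I-{i}. \<Sum>a\<in>PiE I (\<lambda>_. S). e i (a i) \<bullet> e l (a l)) = 0"
      by (rule sum.neutral) (use i assms in \<open>auto intro!: sum_PiE_inner_centered_coordinates\<close>)
    then show "(\<Sum>l\<in>I. \<Sum>a\<in>PiE I (\<lambda>_. S). e i (a i) \<bullet> e l (a l))
       = (\<Sum>a\<in>PiE I (\<lambda>_. S). e i (a i) \<bullet> e i (a i))"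
      using i assms(1) by (simp add: sum.remove)
  qed
  also have "\<dots> = (\<Sum>i\<in>I. real (card S ^ (card I - 1)) * (\<Sum>c\<in>S. (norm (e i c))\<^sup>2))"
    using sum_PiE_coordinate[OF _ assms(1), of _ "\<lambda>c. e _ c \<bullet> e _ c" S]
    by (intro sum.cong refl) (simp add: power2_norm_eq_inner)
  finally show ?thesis by (simp add: sum_distrib_left)
qed

lemma power2_norm_diff_le:
  fixes p q :: "'v::real_inner"
  assumes "\<beta> > 0"
  shows "(norm (p - q))\<^sup>2 \<le> (1 + \<beta>) * (norm p)\<^sup>2 + (1 + 1 / \<beta>) * (norm q)\<^sup>2"
proof -
  have "0 \<le> (norm (\<beta> *\<^sub>R p + q))\<^sup>2 / \<beta>" using assms by simp
  also have "(norm (\<beta> *\<^sub>R p + q))\<^sup>2 = \<beta> * \<beta> * (norm p)\<^sup>2 + 2 * \<beta> * (p \<bullet> q) + (norm q)\<^sup>2"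
    by (simp add: power2_norm_eq_inner inner_add_left inner_add_right inner_commute algebra_simps)
  finally have "0 \<le> \<beta> * (norm p)\<^sup>2 + 2 * (p \<bullet> q) + (1 / \<beta>) * (norm q)\<^sup>2"
    using assms by (simp add: field_simps)
  moreover have "(norm (p - q))\<^sup>2 = (norm p)\<^sup>2 - 2 * (p \<bullet> q) + (norm q)\<^sup>2"
    by (simp add: power2_norm_eq_inner inner_diff_left inner_diff_right inner_commute)
  ultimately show ?thesis by (simp add: algebra_simps)
qed

lemma sum_power2_norm_diff_centered:
  fixes r :: "'b \<Rightarrow> 'v::real_inner"
  assumes "(\<Sum>a\<in>P. r a) = 0"
  shows "(\<Sum>a\<in>P. (norm (u - \<alpha> *\<^sub>R r a))\<^sup>2) = real (card P) * (norm u)\<^sup>2 + \<alpha>\<^sup>2 * (\<Sum>a\<in>P. (norm (r a))\<^sup>2)"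
proof -
  have e: "(norm (u - \<alpha> *\<^sub>R r a))\<^sup>2 = (norm u)\<^sup>2 - 2 * \<alpha> * (u \<bullet> r a) + \<alpha>\<^sup>2 * (norm (r a))\<^sup>2" for a
    unfolding power2_norm_eq_inner
    by (simp add: inner_diff_left inner_diff_right inner_commute algebra_simps power2_eq_square)
  have "(\<Sum>a\<in>P. 2 * \<alpha> * (u \<bullet> r a)) = 0"
    using assms by (simp add: inner_sum_right[symmetric] sum_distrib_left[symmetric])
  then show ?thesis unfolding e by (simp add: sum.distrib sum_subtractf sum_distrib_left)
qed

lemma sum_power2_norm_centered_le:
  fixes d :: "'b \<Rightarrow> 'v::real_inner"
  assumes "finite S" "card S = m" "m > 0"
  shows "(\<Sum>c\<in>S. (norm (d c - (1 / real m) *\<^sub>R (\<Sum>j\<in>S. d j)))\<^sup>2) \<le> (\<Sum>c\<in>S. (norm (d c))\<^sup>2)"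
proof -
  define \<mu> where "\<mu> = (1 / real m) *\<^sub>R (\<Sum>j\<in>S. d j)"
  have s: "(\<Sum>j\<in>S. d j) = real m *\<^sub>R \<mu>" using assms by (simp add: \<mu>_def)
  have e: "(norm (d c - \<mu>))\<^sup>2 = (norm (d c))\<^sup>2 - 2 * (d c \<bullet> \<mu>) + (norm \<mu>)\<^sup>2" for c
    by (simp add: power2_norm_eq_inner inner_diff_left inner_diff_right inner_commute)
  have "(\<Sum>c\<in>S. (norm (d c - \<mu>))\<^sup>2)
      = (\<Sum>c\<in>S. (norm (d c))\<^sup>2) - 2 * ((\<Sum>c\<in>S. d c) \<bullet> \<mu>) + real m * (norm \<mu>)\<^sup>2"
    unfolding e using assms by (simp add: sum.distrib sum_subtractf sum_distrib_left inner_sum_left)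
  also have "\<dots> = (\<Sum>c\<in>S. (norm (d c))\<^sup>2) - real m * (norm \<mu>)\<^sup>2"
    unfolding s by (simp add: power2_norm_eq_inner)
  finally show ?thesis unfolding \<mu>_def by simp
qed

section \<open>Averages and the table error\<close>

lemma avg_diff: "avg n u - avg n v = (1 / real n) *\<^sub>R (\<Sum>i\<in>{1..n}. u i - v i)"
  by (simp add: avg_def sum_subtractf scaleR_diff_right)

lemma norm_avg_diff_le:
  fixes u v :: "nat \<Rightarrow> 'v::real_normed_vector"
  shows "norm (avg n u - avg n v) \<le> (1 / real n) * (\<Sum>i\<in>{1..n}. norm (u i - v i))"
  unfolding avg_diff by (simp add: norm_sum divide_right_mono)

lemma mean_affine:
  fixes A :: "nat \<Rightarrow> real"
  assumes "n \<ge> 1"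
  shows "(1 / real n) * (\<Sum>i\<in>{1..n}. N * A i + C) = N * ((1 / real n) * (\<Sum>i\<in>{1..n}. A i)) + C"
proof -
  have "(\<Sum>i\<in>{1..n}. N * A i + C) = N * (\<Sum>i\<in>{1..n}. A i) + real n * C"
    by (simp add: sum.distrib sum_distrib_left)
  then show ?thesis using assms by (simp add: field_simps)
qed

definition tval_at :: "nat \<Rightarrow> nat \<Rightarrow> 'v::real_normed_vector \<Rightarrow> (nat \<Rightarrow> nat \<Rightarrow> 'v) \<Rightarrow> real" where
  "tval_at n m v z = (1 / real n) * (\<Sum>i\<in>{1..n}. (1 / real m) * (\<Sum>j\<in>{1..m}. (norm (v - z i j))\<^sup>2))"

lemma tval_eq_tval_at: "tval n m x z = tval_at n m (avg n x) z"
  by (simp add: tval_def tval_at_def)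

definition table_update :: "(nat \<Rightarrow> 'v) \<Rightarrow> (nat \<Rightarrow> nat \<Rightarrow> 'v) \<Rightarrow> (nat \<Rightarrow> nat) \<Rightarrow> nat \<Rightarrow> nat \<Rightarrow> 'v" where
  "table_update x z b = (\<lambda>i j. if j = b i then x i else z i j)"

definition grad_node :: "nat \<Rightarrow> (nat \<Rightarrow> nat \<Rightarrow> 'v \<Rightarrow> 'v) \<Rightarrow> nat \<Rightarrow> 'v \<Rightarrow> 'v::real_vector" where
  "grad_node m df i u = (1 / real m) *\<^sub>R (\<Sum>j\<in>{1..m}. df i j u)"

definition saga_est ::
  "nat \<Rightarrow> (nat \<Rightarrow> nat \<Rightarrow> 'v \<Rightarrow> 'v) \<Rightarrow> (nat \<Rightarrow> 'v) \<Rightarrow> (nat \<Rightarrow> nat \<Rightarrow> 'v) \<Rightarrow> nat \<Rightarrow> nat \<Rightarrow> 'v::real_vector"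
where
  "saga_est m df x z i c = df i c (x i) - df i c (z i c) + (1 / real m) *\<^sub>R (\<Sum>j\<in>{1..m}. df i j (z i j))"

text \<open>The value of \<open>tval_at\<close> at \<open>v\<close> averaged over the uniformly random table update.\<close>
definition tval_at_mean_update ::
  "nat \<Rightarrow> nat \<Rightarrow> (nat \<Rightarrow> 'v::real_normed_vector) \<Rightarrow> (nat \<Rightarrow> nat \<Rightarrow> 'v) \<Rightarrow> 'v \<Rightarrow> real"
where
  "tval_at_mean_update n m x z v =
     (1 / real m) * ((1 / real n) * (\<Sum>i\<in>{1..n}. (norm (v - x i))\<^sup>2)) + (1 - 1 / real m) * tval_at n m v z"

lemma sum_swap_scaled_nested:
  fixes c1 c2 :: real
  shows "(\<Sum>b\<in>P. c1 * (\<Sum>i\<in>I. c2 * (\<Sum>j\<in>J. f b i j))) = c1 * (\<Sum>i\<in>I. c2 * (\<Sum>j\<in>J. \<Sum>b\<in>P. f b i j))"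
proof -
  have "(\<Sum>b\<in>P. c1 * (\<Sum>i\<in>I. c2 * (\<Sum>j\<in>J. f b i j))) = (\<Sum>b\<in>P. \<Sum>i\<in>I. \<Sum>j\<in>J. c1 * c2 * f b i j)"
    by (simp add: sum_distrib_left mult.assoc)
  also have "\<dots> = (\<Sum>i\<in>I. \<Sum>j\<in>J. \<Sum>b\<in>P. c1 * c2 * f b i j)"
    by (subst sum.swap) (intro sum.cong refl sum.swap)
  also have "\<dots> = c1 * (\<Sum>i\<in>I. c2 * (\<Sum>j\<in>J. \<Sum>b\<in>P. f b i j))"
    by (simp add: sum_distrib_left mult.assoc)
  finally show ?thesis .
qed

lemma sum_PiE_table_update_entry:
  assumes "n \<ge> 1" "m \<ge> 1" "i \<in> {1..n}" "j \<in> {1..m}"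
  shows "(\<Sum>b\<in>PiE {1..n} (\<lambda>_. {1..m}). (norm (v - table_update x z b i j))\<^sup>2)
       = real (m ^ (n - 1)) * ((norm (v - x i))\<^sup>2 + (real m - 1) * (norm (v - z i j))\<^sup>2)"
proof -
  have "(\<Sum>b\<in>PiE {1..n} (\<lambda>_. {1..m}). (norm (v - table_update x z b i j))\<^sup>2)
      = real (m ^ (n - 1)) * (\<Sum>c\<in>{1..m}. (norm (v - (if j = c then x i else z i j)))\<^sup>2)"
    using sum_PiE_coordinate[OF assms(3), of "\<lambda>c. (norm (v - (if j = c then x i else z i j)))\<^sup>2" "{1..m}"]
    by (simp add: table_update_def)
  also have "(\<Sum>c\<in>{1..m}. (norm (v - (if j = c then x i else z i j)))\<^sup>2)
      = (norm (v - x i))\<^sup>2 + (\<Sum>c\<in>{1..m}-{j}. (norm (v - z i j))\<^sup>2)"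
    using assms(4) by (simp add: sum.remove)
  finally show ?thesis using assms by (simp add: of_nat_diff)
qed

lemma sum_PiE_tval_at_table_update:
  fixes x :: "nat \<Rightarrow> 'v::real_normed_vector"
  assumes n: "n \<ge> 1" and m: "m \<ge> 1"
  shows "(\<Sum>b\<in>PiE {1..n} (\<lambda>_. {1..m}). tval_at n m v (table_update x z b))
       = real (m ^ n) * tval_at_mean_update n m x z v"
proof -
  let ?P = "PiE {1..n} (\<lambda>_. {1..m::nat})"
  define A where "A i = (norm (v - x i))\<^sup>2" for i
  define B where "B i = (\<Sum>j\<in>{1..m}. (norm (v - z i j))\<^sup>2)" for i
  have mn: "real (m ^ n) = real m * real (m ^ (n - 1))"
    using n by (metis One_nat_def Suc_le_D diff_Suc_1 of_nat_mult power_Suc)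
  have row: "(1 / real m) * (\<Sum>j\<in>{1..m}. \<Sum>b\<in>?P. (norm (v - table_update x z b i j))\<^sup>2)
      = real (m ^ n) * ((1 / real m) * A i + (1 - 1 / real m) * ((1 / real m) * B i))"
    if i: "i \<in> {1..n}" for i
  proof -
    have S: "(\<Sum>j\<in>{1..m}. \<Sum>b\<in>?P. (norm (v - table_update x z b i j))\<^sup>2)
        = real (m ^ (n - 1)) * (real m * A i + (real m - 1) * B i)"
    proof -
      have "(\<Sum>j\<in>{1..m}. \<Sum>b\<in>?P. (norm (v - table_update x z b i j))\<^sup>2)
          = (\<Sum>j\<in>{1..m}. real (m ^ (n - 1)) * A i + (real (m ^ (n - 1)) * (real m - 1)) * (norm (v - z i j))\<^sup>2)"
        using sum_PiE_table_update_entry[OF n m i] by (intro sum.cong refl) (simp add: A_def algebra_simps)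
      then show ?thesis by (simp add: sum.distrib B_def flip: sum_distrib_left) (simp add: algebra_simps)
    qed
    show ?thesis unfolding S mn using m by (simp add: field_simps)
  qed
  have "(\<Sum>b\<in>?P. tval_at n m v (table_update x z b))
      = (1 / real n) * (\<Sum>i\<in>{1..n}. (1 / real m) * (\<Sum>j\<in>{1..m}. \<Sum>b\<in>?P. (norm (v - table_update x z b i j))\<^sup>2))"
    unfolding tval_at_def by (rule sum_swap_scaled_nested)
  also have "\<dots> = (1 / real n) * (\<Sum>i\<in>{1..n}. real (m ^ n) * ((1 / real m) * A i + (1 - 1 / real m) * ((1 / real m) * B i)))"
    by (rule arg_cong[where f="(*) (1 / real n)"], intro sum.cong refl row)
  also have "\<dots> = real (m ^ n) * ((1 / real m) * ((1 / real n) * (\<Sum>i\<in>{1..n}. A i))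
      + (1 - 1 / real m) * ((1 / real n) * (\<Sum>i\<in>{1..n}. (1 / real m) * B i)))"
  proof -
    have "(\<Sum>i\<in>{1..n}. real (m ^ n) * ((1 / real m) * A i + (1 - 1 / real m) * ((1 / real m) * B i)))
        = real (m ^ n) * (1 / real m) * (\<Sum>i\<in>{1..n}. A i)
          + real (m ^ n) * (1 - 1 / real m) * (\<Sum>i\<in>{1..n}. (1 / real m) * B i)"
      by (simp add: sum.distrib distrib_left sum_distrib_left mult.assoc)
    moreover have "(1 / real n) * (K * a * SA + K * b * SC) = K * (a * ((1 / real n) * SA) + b * ((1 / real n) * SC))"
      for K a b SA SC :: real
      by (simp add: algebra_simps)
    ultimately show ?thesis by (simp only:)
  qed
  also have "\<dots> = real (m ^ n) * tval_at_mean_update n m x z v"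
    by (simp add: tval_at_mean_update_def tval_at_def A_def B_def)
  finally show ?thesis .
qed

lemma sum_tval_at_mean_update:
  fixes v :: "'b \<Rightarrow> 'v::real_normed_vector"
  assumes n: "n \<ge> 1" and m: "m \<ge> 1"
    and bias_variance: "\<And>y. (\<Sum>a\<in>P. (norm (v a - y))\<^sup>2) = N * (norm (w - y))\<^sup>2 + C"
  shows "(\<Sum>a\<in>P. tval_at_mean_update n m x z (v a)) = N * tval_at_mean_update n m x z w + C"
proof -
  have s1: "(\<Sum>a\<in>P. (1 / real n) * (\<Sum>i\<in>{1..n}. (norm (v a - x i))\<^sup>2))
      = N * ((1 / real n) * (\<Sum>i\<in>{1..n}. (norm (w - x i))\<^sup>2)) + C"
  proof -
    have "(\<Sum>a\<in>P. (1 / real n) * (\<Sum>i\<in>{1..n}. (norm (v a - x i))\<^sup>2))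
        = (1 / real n) * (\<Sum>i\<in>{1..n}. \<Sum>a\<in>P. (norm (v a - x i))\<^sup>2)"
      by (simp add: sum_distrib_left sum.swap[of _ P])
    also have "\<dots> = (1 / real n) * (\<Sum>i\<in>{1..n}. N * (norm (w - x i))\<^sup>2 + C)"
      by (simp add: bias_variance)
    finally show ?thesis unfolding mean_affine[OF n] .
  qed
  have s2: "(\<Sum>a\<in>P. tval_at n m (v a) z) = N * tval_at n m w z + C"
  proof -
    have "(\<Sum>a\<in>P. tval_at n m (v a) z)
        = (1 / real n) * (\<Sum>i\<in>{1..n}. (1 / real m) * (\<Sum>j\<in>{1..m}. N * (norm (w - z i j))\<^sup>2 + C))"
      unfolding tval_at_def by (subst sum_swap_scaled_nested) (simp add: bias_variance)
    also have "\<dots> = (1 / real n) * (\<Sum>i\<in>{1..n}. N * ((1 / real m) * (\<Sum>j\<in>{1..m}. (norm (w - z i j))\<^sup>2)) + C)"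
      using mean_affine[OF m] by simp
    also have "\<dots> = N * tval_at n m w z + C" unfolding tval_at_def by (rule mean_affine[OF n])
    finally show ?thesis .
  qed
  have "(\<Sum>a\<in>P. tval_at_mean_update n m x z (v a))
      = (1 / real m) * (\<Sum>a\<in>P. (1 / real n) * (\<Sum>i\<in>{1..n}. (norm (v a - x i))\<^sup>2))
        + (1 - 1 / real m) * (\<Sum>a\<in>P. tval_at n m (v a) z)"
    by (simp add: tval_at_mean_update_def sum.distrib sum_distrib_left)
  then show ?thesis unfolding s1 s2 by (simp add: tval_at_mean_update_def algebra_simps)
qed

lemma sum_tval_at_sampled_step:
  fixes g :: "nat \<Rightarrow> nat \<Rightarrow> 'v::real_inner"
  assumes n: "n \<ge> 1" and m: "m \<ge> 1"
    and centered: "(\<Sum>a\<in>PiE {1..n} (\<lambda>_. {1..m}). avg n (\<lambda>i. g i (a i)) - h) = 0"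
  shows "(\<Sum>(a, b)\<in>PiE {1..n} (\<lambda>_. {1..m}) \<times> PiE {1..n} (\<lambda>_. {1..m}).
            tval_at n m (u - \<alpha> *\<^sub>R avg n (\<lambda>i. g i (a i))) (table_update x z b))
       = real (m ^ n) * (real (m ^ n) * tval_at_mean_update n m x z (u - \<alpha> *\<^sub>R h)
           + \<alpha>\<^sup>2 * (\<Sum>a\<in>PiE {1..n} (\<lambda>_. {1..m}). (norm (avg n (\<lambda>i. g i (a i)) - h))\<^sup>2))"
proof -
  let ?P = "PiE {1..n} (\<lambda>_. {1..m::nat})"
  have cardP: "card ?P = m ^ n" by (simp add: card_PiE)
  have bias_variance: "(\<Sum>a\<in>?P. (norm ((u - \<alpha> *\<^sub>R avg n (\<lambda>i. g i (a i))) - y))\<^sup>2)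
      = real (m ^ n) * (norm ((u - \<alpha> *\<^sub>R h) - y))\<^sup>2 + \<alpha>\<^sup>2 * (\<Sum>a\<in>?P. (norm (avg n (\<lambda>i. g i (a i)) - h))\<^sup>2)" for y
    using sum_power2_norm_diff_centered[OF centered, of "(u - \<alpha> *\<^sub>R h) - y" \<alpha>] cardP
    by (simp add: algebra_simps)
  have "(\<Sum>(a, b)\<in>?P \<times> ?P. tval_at n m (u - \<alpha> *\<^sub>R avg n (\<lambda>i. g i (a i))) (table_update x z b))
      = (\<Sum>a\<in>?P. \<Sum>b\<in>?P. tval_at n m (u - \<alpha> *\<^sub>R avg n (\<lambda>i. g i (a i))) (table_update x z b))"
    by (rule sum.cartesian_product[symmetric])
  also have "\<dots> = (\<Sum>a\<in>?P. real (m ^ n) * tval_at_mean_update n m x z (u - \<alpha> *\<^sub>R avg n (\<lambda>i. g i (a i))))"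
    by (intro sum.cong refl sum_PiE_tval_at_table_update[OF n m])
  also have "\<dots> = real (m ^ n) * (\<Sum>a\<in>?P. tval_at_mean_update n m x z (u - \<alpha> *\<^sub>R avg n (\<lambda>i. g i (a i))))"
    by (rule sum_distrib_left[symmetric])
  finally show ?thesis unfolding sum_tval_at_mean_update[OF n m bias_variance] .
qed

lemma tval_at_mean_update_shift_le:
  fixes x :: "nat \<Rightarrow> 'v::real_inner"
  assumes n: "n \<ge> 1" and m: "m \<ge> 1"
  shows "tval_at_mean_update n m x z (avg n x - u)
     \<le> (1 / real m) * (2 * ((1 / real n) * cons_err n x) + 2 * (norm u)\<^sup>2)
       + (1 - 1 / real m) * ((1 + 1 / (2 * real m)) * tval n m x z + (1 + 2 * real m) * (norm u)\<^sup>2)"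
proof -
  have young: "(norm ((avg n x - u) - y))\<^sup>2 \<le> (1 + \<beta>) * (norm (avg n x - y))\<^sup>2 + (1 + 1 / \<beta>) * (norm u)\<^sup>2"
    if "\<beta> > 0" for y \<beta>
    using power2_norm_diff_le[OF that, of "avg n x - y" u] by (simp add: algebra_simps)
  have consensus: "(1 / real n) * (\<Sum>i\<in>{1..n}. (norm ((avg n x - u) - x i))\<^sup>2)
      \<le> 2 * ((1 / real n) * cons_err n x) + 2 * (norm u)\<^sup>2"
  proof -
    have "(1 / real n) * (\<Sum>i\<in>{1..n}. (norm ((avg n x - u) - x i))\<^sup>2)
        \<le> (1 / real n) * (\<Sum>i\<in>{1..n}. 2 * (norm (x i - avg n x))\<^sup>2 + 2 * (norm u)\<^sup>2)"
      using young[of 1] by (intro mult_left_mono sum_mono) (auto simp: norm_minus_commute)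
    then show ?thesis unfolding cons_err_def mean_affine[OF n] .
  qed
  have table: "tval_at n m (avg n x - u) z \<le> (1 + 1 / (2 * real m)) * tval n m x z + (1 + 2 * real m) * (norm u)\<^sup>2"
  proof -
    have "tval_at n m (avg n x - u) z \<le> (1 / real n) * (\<Sum>i\<in>{1..n}. (1 / real m) * (\<Sum>j\<in>{1..m}.
            (1 + 1 / (2 * real m)) * (norm (avg n x - z i j))\<^sup>2 + (1 + 2 * real m) * (norm u)\<^sup>2))"
      unfolding tval_at_def using young[of "1 / (2 * real m)"] m by (intro mult_left_mono sum_mono) auto
    then show ?thesis unfolding tval_def mean_affine[OF m] mean_affine[OF n] .
  qed
  show ?thesis
    unfolding tval_at_mean_update_def using consensus table m
    by (intro add_mono mult_left_mono) auto
qed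

lemma sum_PiE_avg_centered:
  fixes g :: "nat \<Rightarrow> nat \<Rightarrow> 'v::real_vector"
  assumes "\<And>i. i \<in> {1..n} \<Longrightarrow> (\<Sum>c\<in>S. g i c - h i) = 0"
  shows "(\<Sum>a\<in>PiE {1..n} (\<lambda>_. S). avg n (\<lambda>i. g i (a i)) - avg n h) = 0"
proof -
  have "(\<Sum>a\<in>PiE {1..n} (\<lambda>_. S). avg n (\<lambda>i. g i (a i)) - avg n h)
      = (1 / real n) *\<^sub>R (\<Sum>i\<in>{1..n}. \<Sum>a\<in>PiE {1..n} (\<lambda>_. S). g i (a i) - h i)"
    by (simp add: avg_diff scaleR_sum_right) (rule sum.swap)
  also have "\<dots> = 0"
    using sum_PiE_coordinate[of _ "{1..n}" "\<lambda>c. g _ c - h _" S] assms by simp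
  finally show ?thesis .
qed

lemma sum_saga_est_centered:
  assumes "m \<ge> 1"
  shows "(\<Sum>c\<in>{1..m}. saga_est m df x z i c - grad_node m df i (x i)) = 0"
  using assms
  by (simp add: saga_est_def grad_node_def sum.distrib sum_subtractf sum_constant_scaleR)

lemma step_size_sq_le:
  assumes "\<alpha> > 0" "L > 0" "m \<ge> 1" "\<alpha> \<le> sqrt (real n) / (sqrt (8 * real m) * L)"
  shows "\<alpha>\<^sup>2 * (8 * real m * L\<^sup>2) \<le> real n"
proof -
  have s8: "sqrt (8 * real m) > 0" using assms(3) by simp
  then have "\<alpha> * (sqrt (8 * real m) * L) \<le> sqrt (real n)"
    using assms by (simp add: field_simps)
  then have "(\<alpha> * (sqrt (8 * real m) * L))\<^sup>2 \<le> (sqrt (real n))\<^sup>2"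
    using assms s8 by (intro power_mono) auto
  then show ?thesis by (simp add: power_mult_distrib algebra_simps)
qed

text \<open>The variance term is absorbed by the contraction of the table error: this is
  where the step-size condition enters.\<close>
lemma saga_step_arith:
  fixes m n c t D H R \<alpha> L :: real
  assumes m: "m \<ge> 1" and c: "c \<ge> 0" and t: "t \<ge> 0" and H0: "H \<ge> 0" and n: "n > 0"
    and step: "\<alpha>\<^sup>2 * (8 * m * L\<^sup>2) \<le> n"
    and H: "H \<le> 8 * L * D + 2 * L\<^sup>2 * c"
    and R: "R \<le> 2 * L\<^sup>2 / n * (c + t)"
  shows "(1 / m) * (2 * c + 2 * (\<alpha>\<^sup>2 * H)) + (1 - 1 / m) * ((1 + 1 / (2 * m)) * t + (1 + 2 * m) * (\<alpha>\<^sup>2 * H))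
           + \<alpha>\<^sup>2 * R
         \<le> (1 - 1 / (4 * m)) * t + 16 * m * \<alpha>\<^sup>2 * L * D + (8 * m * \<alpha>\<^sup>2 * L\<^sup>2 + 9 / (4 * m)) * c"
proof -
  have "\<alpha>\<^sup>2 * R \<le> (\<alpha>\<^sup>2 * (2 * L\<^sup>2 / n)) * (c + t)"
    using mult_left_mono[OF R, of "\<alpha>\<^sup>2"] by simp
  also have "\<dots> \<le> (1 / (4 * m)) * (c + t)"
    using step n m c t by (intro mult_right_mono) (simp_all add: field_simps)
  finally have variance: "\<alpha>\<^sup>2 * R \<le> (1 / (4 * m)) * (c + t)" .
  have slack: "(1 - 1 / (4 * m)) * t + 2 * m * (\<alpha>\<^sup>2 * H) + 9 / (4 * m) * c
      - ((1 / m) * (2 * c + 2 * (\<alpha>\<^sup>2 * H)) + (1 - 1 / m) * ((1 + 1 / (2 * m)) * t + (1 + 2 * m) * (\<alpha>\<^sup>2 * H))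
         + (1 / (4 * m)) * (c + t))
      = t / (2 * m\<^sup>2) + (\<alpha>\<^sup>2 * H) * (1 - 1 / m)"
    using m by (simp add: field_simps power2_eq_square)
  have "t / (2 * m\<^sup>2) + (\<alpha>\<^sup>2 * H) * (1 - 1 / m) \<ge> 0"
    using t H0 m by (intro add_nonneg_nonneg mult_nonneg_nonneg) auto
  moreover have "2 * m * (\<alpha>\<^sup>2 * H) \<le> 16 * m * \<alpha>\<^sup>2 * L * D + 4 * m * \<alpha>\<^sup>2 * L\<^sup>2 * c"
    using mult_left_mono[OF H, of "2 * m * \<alpha>\<^sup>2"] m by (simp add: algebra_simps)
  moreover have "4 * m * \<alpha>\<^sup>2 * L\<^sup>2 * c \<le> 8 * m * \<alpha>\<^sup>2 * L\<^sup>2 * c"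
    using c m by simp
  moreover have "(8 * m * \<alpha>\<^sup>2 * L\<^sup>2 + 9 / (4 * m)) * c = 8 * m * \<alpha>\<^sup>2 * L\<^sup>2 * c + 9 / (4 * m) * c"
    by (simp add: distrib_right)
  ultimately show ?thesis using variance slack by linarith
qed

section \<open>Smooth finite-sum objectives\<close>

locale smooth_sum_objective =
  fixes n m :: nat and L :: real
    and f :: "nat \<Rightarrow> nat \<Rightarrow> 'v::euclidean_space \<Rightarrow> real"
    and df :: "nat \<Rightarrow> nat \<Rightarrow> 'v \<Rightarrow> 'v"
    and F :: "'v \<Rightarrow> real"
  assumes n_pos: "n \<ge> 1" and m_pos: "m \<ge> 1" and L_pos: "L > 0"
    and grad: "\<And>i j x. i \<in> {1..n} \<Longrightarrow> j \<in> {1..m} \<Longrightarrow>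
                 (f i j has_derivative (\<lambda>h. df i j x \<bullet> h)) (at x)"
    and smooth: "\<And>i j x y. i \<in> {1..n} \<Longrightarrow> j \<in> {1..m} \<Longrightarrow>
                 norm (df i j x - df i j y) \<le> L * norm (x - y)"
    and F_eq: "F = (\<lambda>x. (1 / real n) * (\<Sum>i\<in>{1..n}. (1 / real m) * (\<Sum>j\<in>{1..m}. f i j x)))"
begin

definition grad_F :: "'v \<Rightarrow> 'v" where
  "grad_F u = avg n (\<lambda>i. grad_node m df i u)"

lemma grad_node_lipschitz:
  assumes "i \<in> {1..n}"
  shows "norm (grad_node m df i u - grad_node m df i w) \<le> L * norm (u - w)"
proof -
  have "grad_node m df i u - grad_node m df i w = (1 / real m) *\<^sub>R (\<Sum>j\<in>{1..m}. df i j u - df i j w)"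
    by (simp add: grad_node_def sum_subtractf scaleR_diff_right)
  also have "norm \<dots> \<le> (1 / real m) * (\<Sum>j\<in>{1..m}. norm (df i j u - df i j w))"
    by (simp add: norm_sum divide_right_mono)
  also have "\<dots> \<le> (1 / real m) * (\<Sum>j\<in>{1..m}. L * norm (u - w))"
    by (intro mult_left_mono sum_mono) (use assms smooth in auto)
  also have "\<dots> = L * norm (u - w)" using m_pos by simp
  finally show ?thesis .
qed

lemma grad_F_lipschitz: "norm (grad_F u - grad_F w) \<le> L * norm (u - w)"
proof -
  have "norm (grad_F u - grad_F w) \<le> (1 / real n) * (\<Sum>i\<in>{1..n}. norm (grad_node m df i u - grad_node m df i w))"
    unfolding grad_F_def by (rule norm_avg_diff_le)
  also have "\<dots> \<le> (1 / real n) * (\<Sum>i\<in>{1..n}. L * norm (u - w))"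
    by (intro mult_left_mono sum_mono grad_node_lipschitz) auto
  also have "\<dots> = L * norm (u - w)" using n_pos by simp
  finally show ?thesis .
qed

lemma F_has_derivative: "(F has_derivative (\<lambda>h. grad_F x \<bullet> h)) (at x)"
proof -
  have "(F has_derivative (\<lambda>h. (1 / real n) * (\<Sum>i\<in>{1..n}. (1 / real m) * (\<Sum>j\<in>{1..m}. df i j x \<bullet> h)))) (at x)"
    unfolding F_eq by (intro has_derivative_mult_right has_derivative_sum) (auto intro: grad)
  then show ?thesis
    by (simp add: grad_F_def avg_def grad_node_def inner_sum_left)
qed

lemma descent_lemma: "F (x + d) \<le> F x + grad_F x \<bullet> d + L * (norm d)\<^sup>2"
proof -
  define \<phi> where "\<phi> = (\<lambda>t::real. F (x + t *\<^sub>R d))"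
  have "(\<phi> has_real_derivative (grad_F (x + t *\<^sub>R d) \<bullet> d)) (at t)" for t
  proof -
    have "((\<lambda>t. x + t *\<^sub>R d) has_derivative (\<lambda>h. h *\<^sub>R d)) (at t)"
      by (auto intro!: derivative_eq_intros)
    from has_derivative_compose[OF this F_has_derivative]
    show ?thesis unfolding has_field_derivative_def \<phi>_def o_def
      by (rule has_derivative_eq_rhs) (auto simp: fun_eq_iff)
  qed
  then obtain \<theta> where \<theta>: "0 < \<theta>" "\<theta> < 1" "\<phi> 1 - \<phi> 0 = grad_F (x + \<theta> *\<^sub>R d) \<bullet> d"
    using MVT2[of 0 1 \<phi> "\<lambda>t. grad_F (x + t *\<^sub>R d) \<bullet> d"] by auto
  have "grad_F (x + \<theta> *\<^sub>R d) \<bullet> d = grad_F x \<bullet> d + (grad_F (x + \<theta> *\<^sub>R d) - grad_F x) \<bullet> d"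
    by (simp add: inner_diff_left)
  also have "(grad_F (x + \<theta> *\<^sub>R d) - grad_F x) \<bullet> d \<le> norm (grad_F (x + \<theta> *\<^sub>R d) - grad_F x) * norm d"
    by (rule norm_cauchy_schwarz)
  also have "\<dots> \<le> (L * norm (\<theta> *\<^sub>R d)) * norm d"
    using grad_F_lipschitz[of "x + \<theta> *\<^sub>R d" x] by (intro mult_right_mono) auto
  also have "\<dots> \<le> L * (norm d)\<^sup>2"
    using \<theta> L_pos by (simp add: power2_eq_square mult_le_cancel_left1 mult.assoc mult_left_le_one_le)
  finally show ?thesis using \<theta> unfolding \<phi>_def by simp
qed

lemma power2_norm_grad_F_le:
  assumes "bdd_below (range F)"
  shows "(norm (grad_F x))\<^sup>2 \<le> 4 * L * (F x - (INF x. F x))"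
proof -
  let ?g = "grad_F x"
  have "(INF x. F x) \<le> F (x + (- 1 / (2 * L)) *\<^sub>R ?g)"
    using assms by (rule cINF_lower) simp
  also have "\<dots> \<le> F x + ?g \<bullet> ((- 1 / (2 * L)) *\<^sub>R ?g) + L * (norm ((- 1 / (2 * L)) *\<^sub>R ?g))\<^sup>2"
    by (rule descent_lemma)
  also have "\<dots> = F x - (norm ?g)\<^sup>2 / (4 * L)"
    using L_pos by (simp add: power_mult_distrib power_divide field_simps power2_eq_square dot_square_norm)
  finally show ?thesis using L_pos by (simp add: field_simps)
qed

lemma sum_power2_norm_saga_est_dev_le:
  assumes i: "i \<in> {1..n}"
  shows "(\<Sum>c\<in>{1..m}. (norm (saga_est m df x z i c - grad_node m df i (x i)))\<^sup>2)
       \<le> 2 * L\<^sup>2 * (real m * (norm (v - x i))\<^sup>2 + (\<Sum>c\<in>{1..m}. (norm (v - z i c))\<^sup>2))"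
proof -
  define d where "d c = df i c (x i) - df i c (z i c)" for c
  have "saga_est m df x z i c - grad_node m df i (x i) = d c - (1 / real m) *\<^sub>R (\<Sum>j\<in>{1..m}. d j)" for c
    by (simp add: saga_est_def grad_node_def d_def sum_subtractf scaleR_diff_right algebra_simps)
  then have "(\<Sum>c\<in>{1..m}. (norm (saga_est m df x z i c - grad_node m df i (x i)))\<^sup>2)
      \<le> (\<Sum>c\<in>{1..m}. (norm (d c))\<^sup>2)"
    using sum_power2_norm_centered_le[of "{1..m}" m d] m_pos by simp
  also have "\<dots> \<le> (\<Sum>c\<in>{1..m}. 2 * L\<^sup>2 * (norm (v - x i))\<^sup>2 + 2 * L\<^sup>2 * (norm (v - z i c))\<^sup>2)"
  proof (rule sum_mono)
    fix c assume c: "c \<in> {1..m}"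
    have "(norm (d c))\<^sup>2 \<le> (L * norm ((v - z i c) - (v - x i)))\<^sup>2"
      unfolding d_def using smooth[OF i c] by (intro power_mono) auto
    also have "\<dots> \<le> L\<^sup>2 * ((1 + 1) * (norm (v - z i c))\<^sup>2 + (1 + 1 / 1) * (norm (v - x i))\<^sup>2)"
      unfolding power_mult_distrib by (intro mult_left_mono power2_norm_diff_le) auto
    finally show "(norm (d c))\<^sup>2 \<le> 2 * L\<^sup>2 * (norm (v - x i))\<^sup>2 + 2 * L\<^sup>2 * (norm (v - z i c))\<^sup>2"
      by (simp add: algebra_simps)
  qed
  also have "\<dots> = 2 * L\<^sup>2 * (real m * (norm (v - x i))\<^sup>2 + (\<Sum>c\<in>{1..m}. (norm (v - z i c))\<^sup>2))"
    by (simp add: sum.distrib sum_distrib_left algebra_simps)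
  finally show ?thesis .
qed

lemma sum_PiE_power2_norm_saga_noise_le:
  "(\<Sum>a\<in>PiE {1..n} (\<lambda>_. {1..m}).
      (norm (avg n (\<lambda>i. saga_est m df x z i (a i)) - avg n (\<lambda>i. grad_node m df i (x i))))\<^sup>2)
   \<le> real (m ^ n) * (2 * L\<^sup>2 / real n * ((1 / real n) * cons_err n x + tval n m x z))"
proof -
  define e where "e i c = saga_est m df x z i c - grad_node m df i (x i)" for i c
  define xb where "xb = avg n x"
  have scale: "(1 / real n)\<^sup>2 * (real (m ^ (n - 1)) * (2 * L\<^sup>2 * (real m * real n) * C))
      = real (m ^ n) * (2 * L\<^sup>2 / real n * C)" for C
  proof -
    have "real (m ^ n) = real m * real (m ^ (n - 1))"
      using n_pos by (simp add: power_eq_if)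
    then show ?thesis using n_pos by (simp add: field_simps power2_eq_square)
  qed
  have e_centered: "(\<Sum>c\<in>{1..m}. e i c) = 0" for i
    unfolding e_def by (rule sum_saga_est_centered[OF m_pos])
  have "(\<Sum>a\<in>PiE {1..n} (\<lambda>_. {1..m}).
          (norm (avg n (\<lambda>i. saga_est m df x z i (a i)) - avg n (\<lambda>i. grad_node m df i (x i))))\<^sup>2)
      = (1 / real n)\<^sup>2 * (\<Sum>a\<in>PiE {1..n} (\<lambda>_. {1..m}). (norm (\<Sum>i\<in>{1..n}. e i (a i)))\<^sup>2)"
    unfolding avg_diff norm_scaleR power_mult_distrib e_def by (simp add: sum_distrib_left)
  also have "\<dots> = (1 / real n)\<^sup>2 * (real (m ^ (n - 1)) * (\<Sum>i\<in>{1..n}. \<Sum>c\<in>{1..m}. (norm (e i c))\<^sup>2))"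
    using sum_PiE_power2_norm_sum_centered[OF finite_atLeastAtMost[of 1 n] e_centered] by simp
  also have "\<dots> \<le> (1 / real n)\<^sup>2 * (real (m ^ (n - 1)) * (\<Sum>i\<in>{1..n}.
      2 * L\<^sup>2 * (real m * (norm (xb - x i))\<^sup>2 + (\<Sum>c\<in>{1..m}. (norm (xb - z i c))\<^sup>2))))"
    unfolding e_def by (intro mult_left_mono sum_mono sum_power2_norm_saga_est_dev_le) auto
  also have "(\<Sum>i\<in>{1..n}. 2 * L\<^sup>2 * (real m * (norm (xb - x i))\<^sup>2 + (\<Sum>c\<in>{1..m}. (norm (xb - z i c))\<^sup>2)))
      = 2 * L\<^sup>2 * (real m * real n) * ((1 / real n) * cons_err n x + tval n m x z)"
    using n_pos m_pos
    by (simp add: cons_err_def tval_def xb_def norm_minus_commute sum.distrib sum_distrib_left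
        sum_divide_distrib field_simps)
  also have "(1 / real n)\<^sup>2 * (real (m ^ (n - 1)) * (2 * L\<^sup>2 * (real m * real n) * ((1 / real n) * cons_err n x + tval n m x z)))
      = real (m ^ n) * (2 * L\<^sup>2 / real n * ((1 / real n) * cons_err n x + tval n m x z))"
    by (rule scale)
  finally show ?thesis .
qed

lemma power2_norm_avg_grad_node_le:
  assumes "bdd_below (range F)"
  shows "(norm (avg n (\<lambda>i. grad_node m df i (x i))))\<^sup>2
       \<le> 8 * L * (F (avg n x) - (INF x. F x)) + 2 * L\<^sup>2 * ((1 / real n) * cons_err n x)"
proof -
  let ?h = "avg n (\<lambda>i. grad_node m df i (x i))" and ?G = "grad_F (avg n x)"
  have "norm (?h - ?G) \<le> (1 / real n) * (\<Sum>i\<in>{1..n}. norm (grad_node m df i (x i) - grad_node m df i (avg n x)))"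
    unfolding grad_F_def by (rule norm_avg_diff_le)
  also have "\<dots> \<le> (1 / real n) * (\<Sum>i\<in>{1..n}. L * norm (x i - avg n x))"
    by (intro mult_left_mono sum_mono grad_node_lipschitz) auto
  finally have "(norm (?h - ?G))\<^sup>2 \<le> ((1 / real n) * (\<Sum>i\<in>{1..n}. L * norm (x i - avg n x)))\<^sup>2"
    by (intro power_mono) auto
  also have "\<dots> = (1 / real n)\<^sup>2 * (\<Sum>i\<in>{1..n}. L * norm (x i - avg n x))\<^sup>2"
    by (rule power_mult_distrib)
  also have "\<dots> \<le> (1 / real n)\<^sup>2 * ((\<Sum>i\<in>{1..n}. (L * norm (x i - avg n x))\<^sup>2) * card {1..n})"
    by (intro mult_left_mono sum_squared_le_sum_of_squares) auto
  also have "\<dots> = L\<^sup>2 * ((1 / real n) * cons_err n x)"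
    using n_pos by (simp add: cons_err_def power_mult_distrib sum_distrib_left[symmetric] power2_eq_square field_simps)
  finally have "(norm (?h - ?G))\<^sup>2 \<le> L\<^sup>2 * ((1 / real n) * cons_err n x)" .
  moreover have "(norm ?h)\<^sup>2 \<le> (1 + 1) * (norm ?G)\<^sup>2 + (1 + 1 / 1) * (norm (?G - ?h))\<^sup>2"
    using power2_norm_diff_le[of 1 ?G "?G - ?h"] by simp
  moreover have "(norm ?G)\<^sup>2 \<le> 4 * L * (F (avg n x) - (INF x. F x))"
    by (rule power2_norm_grad_F_le[OF assms])
  ultimately show ?thesis by (simp add: norm_minus_commute)
qed

lemma mean_tval_at_saga_step_le:
  assumes F_bdd: "bdd_below (range F)" and \<alpha>_pos: "\<alpha> > 0"
    and \<alpha>_le: "\<alpha> \<le> sqrt (real n) / (sqrt (8 * real m) * L)"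
  shows "(\<Sum>(a, b)\<in>PiE {1..n} (\<lambda>_. {1..m}) \<times> PiE {1..n} (\<lambda>_. {1..m}).
            tval_at n m (avg n x - \<alpha> *\<^sub>R avg n (\<lambda>i. saga_est m df x z i (a i))) (table_update x z b))
          / real (card (PiE {1..n} (\<lambda>_. {1..m}) \<times> PiE {1..n} (\<lambda>_. {1..m::nat})))
     \<le> (1 - 1 / (4 * real m)) * tval n m x z
       + 16 * real m * \<alpha>\<^sup>2 * L * (F (avg n x) - (INF x. F x))
       + (8 * real m * \<alpha>\<^sup>2 * L\<^sup>2 + 9 / (4 * real m)) * (1 / real n) * cons_err n x"
proof -
  let ?P = "PiE {1..n} (\<lambda>_. {1..m::nat})"
  define N where "N = real (m ^ n)"
  define h where "h = avg n (\<lambda>i. grad_node m df i (x i))"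
  define R where "R = (\<Sum>a\<in>?P. (norm (avg n (\<lambda>i. saga_est m df x z i (a i)) - h))\<^sup>2)"
  have N: "N > 0" "real (card (?P \<times> ?P)) = N * N"
    using m_pos by (simp_all add: N_def card_cartesian_product card_PiE)
  have "(\<Sum>a\<in>?P. avg n (\<lambda>i. saga_est m df x z i (a i)) - h) = 0"
    unfolding h_def by (rule sum_PiE_avg_centered) (rule sum_saga_est_centered[OF m_pos])
  from sum_tval_at_sampled_step[OF n_pos m_pos this]
  have "(\<Sum>(a, b)\<in>?P \<times> ?P. tval_at n m (avg n x - \<alpha> *\<^sub>R avg n (\<lambda>i. saga_est m df x z i (a i))) (table_update x z b))
          / real (card (?P \<times> ?P))
      = tval_at_mean_update n m x z (avg n x - \<alpha> *\<^sub>R h) + \<alpha>\<^sup>2 * (R / N)"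
    using N by (simp add: R_def N_def field_simps)
  also have "\<dots> \<le> (1 - 1 / (4 * real m)) * tval n m x z
       + 16 * real m * \<alpha>\<^sup>2 * L * (F (avg n x) - (INF x. F x))
       + (8 * real m * \<alpha>\<^sup>2 * L\<^sup>2 + 9 / (4 * real m)) * ((1 / real n) * cons_err n x)"
  proof -
    have c: "(1 / real n) * cons_err n x \<ge> 0" and t: "tval n m x z \<ge> 0"
      by (auto simp: cons_err_def tval_def intro!: sum_nonneg divide_nonneg_nonneg)
    have R: "R / N \<le> 2 * L\<^sup>2 / real n * ((1 / real n) * cons_err n x + tval n m x z)"
      using sum_PiE_power2_norm_saga_noise_le[of x z] N unfolding R_def h_def N_def
      by (simp add: pos_divide_le_eq mult.commute)
    have "tval_at_mean_update n m x z (avg n x - \<alpha> *\<^sub>R h)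
        \<le> (1 / real m) * (2 * ((1 / real n) * cons_err n x) + 2 * (\<alpha>\<^sup>2 * (norm h)\<^sup>2))
          + (1 - 1 / real m) * ((1 + 1 / (2 * real m)) * tval n m x z + (1 + 2 * real m) * (\<alpha>\<^sup>2 * (norm h)\<^sup>2))"
      using tval_at_mean_update_shift_le[OF n_pos m_pos, of x z "\<alpha> *\<^sub>R h"] by (simp add: power_mult_distrib)
    moreover have "(1 / real m) * (2 * ((1 / real n) * cons_err n x) + 2 * (\<alpha>\<^sup>2 * (norm h)\<^sup>2))
          + (1 - 1 / real m) * ((1 + 1 / (2 * real m)) * tval n m x z + (1 + 2 * real m) * (\<alpha>\<^sup>2 * (norm h)\<^sup>2))
          + \<alpha>\<^sup>2 * (R / N)
        \<le> (1 - 1 / (4 * real m)) * tval n m x z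
          + 16 * real m * \<alpha>\<^sup>2 * L * (F (avg n x) - (INF x. F x))
          + (8 * real m * \<alpha>\<^sup>2 * L\<^sup>2 + 9 / (4 * real m)) * ((1 / real n) * cons_err n x)"
      using m_pos n_pos
      by (intro saga_step_arith[OF _ c t _ _ step_size_sq_le[OF \<alpha>_pos L_pos m_pos \<alpha>_le] _ R]
          power2_norm_avg_grad_node_le[OF F_bdd, of x, folded h_def]) auto
    ultimately show ?thesis by linarith
  qed
  finally show ?thesis by (simp add: mult.assoc)
qed

end

section \<open>One step of GT-SAGA\<close>

type_synonym 'v saga_state = "(nat \<Rightarrow> 'v) \<times> (nat \<Rightarrow> 'v) \<times> (nat \<Rightarrow> 'v) \<times> (nat \<Rightarrow> nat \<Rightarrow> 'v)"

definition saga_step ::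
  "(nat \<Rightarrow> nat \<Rightarrow> real) \<Rightarrow> (nat \<Rightarrow> nat \<Rightarrow> 'v::real_normed_vector \<Rightarrow> 'v) \<Rightarrow> nat \<Rightarrow> nat \<Rightarrow> real
   \<Rightarrow> 'v saga_state \<Rightarrow> (nat \<Rightarrow> nat) \<Rightarrow> (nat \<Rightarrow> nat) \<Rightarrow> 'v saga_state"
where
  "saga_step W df n m \<alpha> st a b =
     (case st of (x, y, gp, z) \<Rightarrow>
       let g = (\<lambda>i. saga_est m df x z i (a i));
           y' = (\<lambda>i. \<Sum>r\<in>{1..n}. W i r *\<^sub>R (y r + g r - gp r));
           x' = (\<lambda>i. \<Sum>r\<in>{1..n}. W i r *\<^sub>R (x r - \<alpha> *\<^sub>R y' r))
       in (x', y', g, table_update x z b))"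

lemma gt_saga_Suc_step:
  "gt_saga W df n m \<alpha> x0 tau s (Suc k) = saga_step W df n m \<alpha> (gt_saga W df n m \<alpha> x0 tau s k) (tau k) (s k)"
  by (simp add: saga_step_def saga_est_def table_update_def)

text \<open>The hypotheses say nothing about the samples of indices outside the nodes \<open>1..n\<close>, so
  state entries there need not be measurable; all quantities of interest only see the nodes.\<close>
definition nodes_agree :: "nat \<Rightarrow> 'v saga_state \<Rightarrow> 'v saga_state \<Rightarrow> bool" where
  "nodes_agree n st st' \<longleftrightarrow> (\<forall>i\<in>{1..n}. fst st i = fst st' i \<and> fst (snd st) i = fst (snd st') i
      \<and> fst (snd (snd st)) i = fst (snd (snd st')) i \<and> snd (snd (snd st)) i = snd (snd (snd st')) i)"

lemma nodes_agree_refl [simp]: "nodes_agree n st st"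
  by (simp add: nodes_agree_def)

lemma saga_step_eq:
  "saga_step W df n m \<alpha> (x, y, gp, z) a b =
     ((\<lambda>i. \<Sum>r\<in>{1..n}. W i r *\<^sub>R (x r - \<alpha> *\<^sub>R (\<Sum>q\<in>{1..n}. W r q *\<^sub>R (y q + saga_est m df x z q (a q) - gp q)))),
      (\<lambda>i. \<Sum>r\<in>{1..n}. W i r *\<^sub>R (y r + saga_est m df x z r (a r) - gp r)),
      (\<lambda>i. saga_est m df x z i (a i)), table_update x z b)"
  by (simp add: saga_step_def)

lemma saga_step_nodes_agree:
  assumes "nodes_agree n st st'" "\<forall>i\<in>{1..n}. a i = a' i \<and> b i = b' i"
  shows "nodes_agree n (saga_step W df n m \<alpha> st a b) (saga_step W df n m \<alpha> st' a' b')"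
proof -
  obtain x y gp z where st: "st = (x, y, gp, z)" by (cases st) auto
  obtain x' y' gp' z' where st': "st' = (x', y', gp', z')" by (cases st') auto
  have e: "\<forall>i\<in>{1..n}. x i = x' i \<and> y i = y' i \<and> gp i = gp' i \<and> z i = z' i"
    using assms(1) by (simp add: nodes_agree_def st st')
  have g: "saga_est m df x z i (a i) = saga_est m df x' z' i (a' i)" if "i \<in> {1..n}" for i
    using e assms(2) that by (simp add: saga_est_def)
  have y: "(\<Sum>r\<in>{1..n}. W i r *\<^sub>R (y r + saga_est m df x z r (a r) - gp r))
      = (\<Sum>r\<in>{1..n}. W i r *\<^sub>R (y' r + saga_est m df x' z' r (a' r) - gp' r))" for i
    using e g by (intro sum.cong) auto
  have x: "(\<Sum>r\<in>{1..n}. W i r *\<^sub>R (x r - \<alpha> *\<^sub>R (\<Sum>q\<in>{1..n}. W r q *\<^sub>R (y q + saga_est m df x z q (a q) - gp q))))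
      = (\<Sum>r\<in>{1..n}. W i r *\<^sub>R (x' r - \<alpha> *\<^sub>R (\<Sum>q\<in>{1..n}. W r q *\<^sub>R (y' q + saga_est m df x' z' q (a' q) - gp' q))))" for i
    using e y by (intro sum.cong) auto
  show ?thesis unfolding nodes_agree_def st st' saga_step_eq prod.sel
    by (intro ballI conjI x y g) (use e assms(2) in \<open>auto simp: table_update_def\<close>)
qed

lemma gt_saga_nodes_agree:
  assumes "\<forall>t<k. \<forall>i\<in>{1..n}. tau t i = tau' t i \<and> s t i = s' t i"
  shows "nodes_agree n (gt_saga W df n m \<alpha> x0 tau s k) (gt_saga W df n m \<alpha> x0 tau' s' k)"
  using assms
proof (induction k)
  case 0 then show ?case by simp
next
  case (Suc k)
  then show ?case unfolding gt_saga_Suc_step by (intro saga_step_nodes_agree) auto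
qed

lemma tval_nodes_agree:
  assumes "nodes_agree n st st'"
  shows "tval n m (fst st) (snd (snd (snd st))) = tval n m (fst st') (snd (snd (snd st')))"
proof -
  have "avg n (fst st) = avg n (fst st')"
    using assms unfolding avg_def nodes_agree_def by simp
  then show ?thesis using assms unfolding tval_def nodes_agree_def by simp
qed

lemma avg_mix:
  fixes v :: "nat \<Rightarrow> 'v::real_vector"
  assumes "\<forall>r\<in>{1..n}. (\<Sum>i\<in>{1..n}. W i r) = 1"
  shows "avg n (\<lambda>i. \<Sum>r\<in>{1..n}. W i r *\<^sub>R v r) = avg n v"
proof -
  have "(\<Sum>i\<in>{1..n}. \<Sum>r\<in>{1..n}. W i r *\<^sub>R v r) = (\<Sum>r\<in>{1..n}. (\<Sum>i\<in>{1..n}. W i r) *\<^sub>R v r)"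
    by (subst sum.swap) (simp add: scaleR_sum_left)
  then show ?thesis using assms by (simp add: avg_def)
qed

lemma avg_saga_step:
  fixes x :: "nat \<Rightarrow> 'v::real_normed_vector"
  assumes col: "\<forall>r\<in>{1..n}. (\<Sum>i\<in>{1..n}. W i r) = 1"
  shows "avg n (fst (saga_step W df n m \<alpha> (x, y, gp, z) a b))
           = avg n x - \<alpha> *\<^sub>R (avg n y + avg n (\<lambda>i. saga_est m df x z i (a i)) - avg n gp)"
    and "avg n (fst (snd (saga_step W df n m \<alpha> (x, y, gp, z) a b)))
           = avg n y + avg n (fst (snd (snd (saga_step W df n m \<alpha> (x, y, gp, z) a b)))) - avg n gp"
proof -
  have x': "avg n (\<lambda>r. x r - \<alpha> *\<^sub>R v r) = avg n x - \<alpha> *\<^sub>R avg n v" for v :: "nat \<Rightarrow> 'v"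
    by (simp add: avg_def sum_subtractf scaleR_diff_right scaleR_sum_right)
  have y': "avg n (\<lambda>r. y r + g r - gp r) = avg n y + avg n g - avg n gp" for g :: "nat \<Rightarrow> 'v"
    by (simp add: avg_def sum.distrib sum_subtractf scaleR_add_right scaleR_diff_right)
  show "avg n (fst (saga_step W df n m \<alpha> (x, y, gp, z) a b))
      = avg n x - \<alpha> *\<^sub>R (avg n y + avg n (\<lambda>i. saga_est m df x z i (a i)) - avg n gp)"
    and "avg n (fst (snd (saga_step W df n m \<alpha> (x, y, gp, z) a b)))
      = avg n y + avg n (fst (snd (snd (saga_step W df n m \<alpha> (x, y, gp, z) a b)))) - avg n gp"
    unfolding saga_step_eq prod.sel avg_mix[OF col] x' y' by simp_all
qed

lemma gt_saga_tracking:
  assumes "\<forall>r\<in>{1..n}. (\<Sum>i\<in>{1..n}. W i r) = 1"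
  shows "avg n (fst (snd (gt_saga W df n m \<alpha> x0 tau s k)))
       = avg n (fst (snd (snd (gt_saga W df n m \<alpha> x0 tau s k))))"
proof (induction k)
  case 0 then show ?case by (simp add: avg_def)
next
  case (Suc k)
  obtain x y gp z where "gt_saga W df n m \<alpha> x0 tau s k = (x, y, gp, z)"
    by (cases "gt_saga W df n m \<alpha> x0 tau s k")
  with Suc show ?case
    unfolding gt_saga_Suc_step using avg_saga_step(2)[OF assms, of df m \<alpha> x y gp z "tau k" "s k"] by simp
qed

lemma (in smooth_sum_objective) mean_tval_gt_saga_step_le:
  assumes col: "\<forall>r\<in>{1..n}. (\<Sum>i\<in>{1..n}. W i r) = 1"
    and F_bdd: "bdd_below (range F)" and \<alpha>_pos: "\<alpha> > 0"
    and \<alpha>_le: "\<alpha> \<le> sqrt (real n) / (sqrt (8 * real m) * L)"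
  shows "(\<Sum>q\<in>PiE {1..n} (\<lambda>_. {1..m}) \<times> PiE {1..n} (\<lambda>_. {1..m}).
            tval n m (fst (saga_step W df n m \<alpha> (gt_saga W df n m \<alpha> x0 tau s k) (fst q) (snd q)))
              (snd (snd (snd (saga_step W df n m \<alpha> (gt_saga W df n m \<alpha> x0 tau s k) (fst q) (snd q))))))
          / real (card (PiE {1..n} (\<lambda>_. {1..m}) \<times> PiE {1..n} (\<lambda>_. {1..m::nat})))
     \<le> (1 - 1 / (4 * real m)) * tval n m (gt_x W df n m \<alpha> x0 tau s k) (gt_z W df n m \<alpha> x0 tau s k)
       + 16 * real m * \<alpha>\<^sup>2 * L * (F (avg n (gt_x W df n m \<alpha> x0 tau s k)) - (INF x. F x))
       + (8 * real m * \<alpha>\<^sup>2 * L\<^sup>2 + 9 / (4 * real m)) * (1 / real n) * cons_err n (gt_x W df n m \<alpha> x0 tau s k)"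
proof -
  obtain x y gp z where st: "gt_saga W df n m \<alpha> x0 tau s k = (x, y, gp, z)"
    by (cases "gt_saga W df n m \<alpha> x0 tau s k")
  have "avg n y = avg n gp"
    using gt_saga_tracking[OF col, of df m \<alpha> x0 tau s k] st by simp
  then have "tval n m (fst (saga_step W df n m \<alpha> (x, y, gp, z) a b)) (snd (snd (snd (saga_step W df n m \<alpha> (x, y, gp, z) a b))))
      = tval_at n m (avg n x - \<alpha> *\<^sub>R avg n (\<lambda>i. saga_est m df x z i (a i))) (table_update x z b)" for a b
    unfolding tval_eq_tval_at avg_saga_step(1)[OF col] by (simp add: saga_step_eq)
  then show ?thesis
    using mean_tval_at_saga_step_le[OF F_bdd \<alpha>_pos \<alpha>_le, of x z] st by (simp add: split_beta gt_x_def gt_z_def)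
qed

section \<open>Conditioning on an independent finite index\<close>

lemma measurable_countable_range_comp:
  fixes h :: "'b \<Rightarrow> real"
  assumes "countable (U ` space N)"
    and "\<And>p. p \<in> U ` space N \<Longrightarrow> {\<omega>\<in>space N. U \<omega> = p} \<in> sets N"
  shows "(\<lambda>\<omega>. h (U \<omega>)) \<in> borel_measurable N"
proof (rule measurableI)
  fix A :: "real set"
  have "(\<lambda>\<omega>. h (U \<omega>)) -` A \<inter> space N = (\<Union>p\<in>U ` space N \<inter> {p. h p \<in> A}. {\<omega>\<in>space N. U \<omega> = p})"
    by auto
  also have "\<dots> \<in> sets N"
    by (rule sets.countable_UN'') (use assms in \<open>auto intro: countable_subset\<close>)
  finally show "(\<lambda>\<omega>. h (U \<omega>)) -` A \<inter> space N \<in> sets N" .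
qed simp

context sigma_finite_subalgebra
begin

lemma integral_mult_indicator_indep:
  assumes prob: "prob_space M"
    and Z: "Z \<in> borel_measurable F" "integrable M Z"
    and B: "B \<in> sets M"
    and indep: "\<And>A. A \<in> sets F \<Longrightarrow> measure M (A \<inter> B) = measure M A * p"
  shows "(\<integral>\<omega>. Z \<omega> * indicator B \<omega> \<partial>M) = p * (\<integral>\<omega>. Z \<omega> \<partial>M)"
proof -
  interpret P: prob_space M by (rule prob)
  have FM: "A \<in> sets F \<Longrightarrow> A \<in> sets M" for A using subalg by (auto simp: subalgebra_def)
  have "AE \<omega> in M. real_cond_exp M F (indicator B) \<omega> = p"
  proof (rule real_cond_exp_charact)
    fix A assume A: "A \<in> sets F"
    have "(\<integral>\<omega>\<in>A. indicator B \<omega> \<partial>M) = measure M (A \<inter> B)"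
      using FM[OF A] B unfolding set_lebesgue_integral_def
      by (simp add: indicator_inter_arith[symmetric] mult.commute)
    also have "\<dots> = (\<integral>\<omega>\<in>A. p \<partial>M)"
      using indep[OF A] FM[OF A] unfolding set_lebesgue_integral_def by (simp add: P.emeasure_eq_measure)
    finally show "(\<integral>\<omega>\<in>A. indicator B \<omega> \<partial>M) = (\<integral>\<omega>\<in>A. p \<partial>M)" .
  qed (use B in \<open>auto simp: P.emeasure_eq_measure\<close>)
  then have "(\<integral>\<omega>. Z \<omega> * real_cond_exp M F (indicator B) \<omega> \<partial>M) = (\<integral>\<omega>. Z \<omega> * p \<partial>M)"
    by (intro integral_cong_AE) (use Z measurable_from_subalg[OF subalg] in auto)
  moreover have "(\<integral>\<omega>. Z \<omega> * real_cond_exp M F (indicator B) \<omega> \<partial>M) = (\<integral>\<omega>. Z \<omega> * indicator B \<omega> \<partial>M)"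
    using integrable_mult_indicator[OF B Z(2)] Z B by (intro real_cond_exp_intg(2)) (auto simp: mult.commute)
  ultimately show ?thesis by simp
qed

lemma real_cond_exp_indep_index:
  fixes G :: "'q \<Rightarrow> 'a \<Rightarrow> real" and V :: "'a \<Rightarrow> 'q"
  assumes prob: "prob_space M" and Q: "finite Q"
    and V_sets: "\<And>q. q \<in> Q \<Longrightarrow> {\<omega>\<in>space M. V \<omega> = q} \<in> sets M"
    and V_range: "AE \<omega> in M. V \<omega> \<in> Q"
    and indep: "\<And>A q. A \<in> sets F \<Longrightarrow> q \<in> Q \<Longrightarrow> measure M (A \<inter> {\<omega>\<in>space M. V \<omega> = q}) = measure M A * p q"
    and G_meas: "\<And>q. q \<in> Q \<Longrightarrow> G q \<in> borel_measurable F"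
    and G_int: "\<And>q. q \<in> Q \<Longrightarrow> integrable M (G q)"
    and T_meas: "T \<in> borel_measurable M"
    and T_eq: "\<And>\<omega>. \<omega> \<in> space M \<Longrightarrow> V \<omega> \<in> Q \<Longrightarrow> T \<omega> = G (V \<omega>) \<omega>"
  shows "AE \<omega> in M. real_cond_exp M F T \<omega> = (\<Sum>q\<in>Q. p q * G q \<omega>)"
proof -
  define B where "B q = {\<omega>\<in>space M. V \<omega> = q}" for q
  have FM: "A \<in> sets F \<Longrightarrow> A \<in> sets M" for A using subalg by (auto simp: subalgebra_def)
  have GM: "q \<in> Q \<Longrightarrow> G q \<in> borel_measurable M" for q using measurable_from_subalg[OF subalg G_meas] by blast
  have GB_int: "integrable M (\<lambda>\<omega>. G q \<omega> * indicator (B q) \<omega>)" if "q \<in> Q" for q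
    using integrable_mult_indicator[OF V_sets G_int, OF that that] by (simp add: B_def mult.commute)
  have T_split: "AE \<omega> in M. T \<omega> = (\<Sum>q\<in>Q. G q \<omega> * indicator (B q) \<omega>)"
    using V_range AE_space
  proof eventually_elim
    case (elim \<omega>)
    have "(\<Sum>q\<in>Q. G q \<omega> * indicator (B q) \<omega>) = (\<Sum>q\<in>Q. if q = V \<omega> then G q \<omega> else 0)"
      using elim by (intro sum.cong) (auto simp: B_def)
    then show ?case using Q elim T_eq by simp
  qed
  have T_int: "integrable M T"
    using integrable_cong_AE[OF T_meas _ T_split] GB_int
    by (auto intro!: borel_measurable_sum borel_measurable_times GM
        simp: B_def borel_measurable_indicator_iff Int_def V_sets)
  have "AE \<omega> in M. real_cond_exp M F T \<omega> = (\<Sum>q\<in>Q. p q * G q \<omega>)"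
  proof (rule real_cond_exp_charact[OF _ T_int])
    fix A assume A: "A \<in> sets F"
    have AG_int: "integrable M (\<lambda>\<omega>. indicator A \<omega> * G q \<omega>)" if "q \<in> Q" for q
      using integrable_mult_indicator[OF FM[OF A] G_int[OF that]] by simp
    have "(\<integral>\<omega>\<in>A. T \<omega> \<partial>M) = (\<integral>\<omega>. (\<Sum>q\<in>Q. indicator A \<omega> * G q \<omega> * indicator (B q) \<omega>) \<partial>M)"
      unfolding set_lebesgue_integral_def using T_split
      by (intro integral_cong_AE)
        (auto simp: sum_distrib_left mult.assoc B_def V_sets
          intro!: borel_measurable_times borel_measurable_sum borel_measurable_indicator T_meas GM FM[OF A])
    also have "\<dots> = (\<Sum>q\<in>Q. \<integral>\<omega>. indicator A \<omega> * G q \<omega> * indicator (B q) \<omega> \<partial>M)"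
      by (intro Bochner_Integration.integral_sum)
        (use integrable_mult_indicator[OF FM[OF A] GB_int] in \<open>auto simp: mult.assoc\<close>)
    also have "\<dots> = (\<Sum>q\<in>Q. p q * (\<integral>\<omega>. indicator A \<omega> * G q \<omega> \<partial>M))"
      using A G_meas AG_int V_sets indep
      by (intro sum.cong refl integral_mult_indicator_indep[OF prob]) (auto simp: B_def)
    also have "\<dots> = (\<integral>\<omega>\<in>A. (\<Sum>q\<in>Q. p q * G q \<omega>) \<partial>M)"
      unfolding set_lebesgue_integral_def using AG_int
      by (simp add: sum_distrib_left Bochner_Integration.integral_sum mult.left_commute)
    finally show "(\<integral>\<omega>\<in>A. T \<omega> \<partial>M) = (\<integral>\<omega>\<in>A. (\<Sum>q\<in>Q. p q * G q \<omega>) \<partial>M)" .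
  qed (use G_meas G_int in auto)
  then show ?thesis .
qed

end

section \<open>The sampling process\<close>

lemma space_filt [simp]: "space (filt M tau s n k) = space M"
  unfolding filt_def by (simp add: space_measure_of_conv)

lemma sets_filt:
  "sets (filt M tau s n k) = sigma_sets (space M)
     (\<Union>t\<in>{..<k}. \<Union>i\<in>{1..n}. {tau t i -` A \<inter> space M | A. True} \<union> {s t i -` A \<inter> space M | A. True})"
  unfolding filt_def by (rule sets_measure_of) auto

lemma subalgebra_filt:
  assumes "\<And>t i. i \<in> {1..n} \<Longrightarrow> tau t i \<in> measurable M (count_space UNIV)"
    and "\<And>t i. i \<in> {1..n} \<Longrightarrow> s t i \<in> measurable M (count_space UNIV)"
  shows "subalgebra M (filt M tau s n k)"
proof -
  have "(\<Union>t\<in>{..<k}. \<Union>i\<in>{1..n}. {tau t i -` A \<inter> space M | A. True} \<union> {s t i -` A \<inter> space M | A. True})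
      \<subseteq> sets M"
    using assms by (auto intro: measurable_sets)
  then show ?thesis unfolding subalgebra_def sets_filt by (simp add: sets.sigma_sets_subset)
qed

lemma measurable_filt:
  assumes "t < k" "i \<in> {1..n}"
  shows "tau t i \<in> measurable (filt M tau s n k) (count_space UNIV)"
    and "s t i \<in> measurable (filt M tau s n k) (count_space UNIV)"
proof -
  have "f -` A \<inter> space M \<in> sets (filt M tau s n k)" if "f = tau t i \<or> f = s t i" for f A
    unfolding sets_filt using assms that by (intro sigma_sets.Basic) blast
  then show "tau t i \<in> measurable (filt M tau s n k) (count_space UNIV)"
    and "s t i \<in> measurable (filt M tau s n k) (count_space UNIV)"
    by (auto intro!: measurableI)
qed

lemma measure_uniform_sample:
  assumes "Z \<in> measurable M (count_space UNIV)"
    and "distr M (count_space UNIV) Z = measure_pmf (pmf_of_set {1..m::nat})"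
    and "m \<ge> 1" "v \<in> {1..m}"
  shows "measure M (Z -` {v} \<inter> space M) = 1 / real m"
proof -
  have "measure M (Z -` {v} \<inter> space M) = measure (distr M (count_space UNIV) Z) {v}"
    using assms(1) by (simp add: measure_distr)
  then show ?thesis using assms(2-) by (simp add: measure_pmf_single)
qed

lemma AE_uniform_sample_range:
  assumes "Z \<in> measurable M (count_space UNIV)"
    and "distr M (count_space UNIV) Z = measure_pmf (pmf_of_set {1..m::nat})"
    and "m \<ge> 1"
  shows "AE \<omega> in M. Z \<omega> \<in> {1..m}"
proof -
  have "AE x in distr M (count_space UNIV) Z. x \<in> {1..m}"
    unfolding assms(2) using assms(3) by (simp add: AE_measure_pmf_iff)
  then show ?thesis by (subst (asm) AE_distr_iff[OF assms(1)]) auto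
qed

locale saga_sampling = prob_space M for M :: "'a measure" +
  fixes n m :: nat and tau s :: "nat \<Rightarrow> nat \<Rightarrow> 'a \<Rightarrow> nat"
  assumes n_pos: "n \<ge> 1" and m_pos: "m \<ge> 1"
    and tau_rv: "\<And>t i. i \<in> {1..n} \<Longrightarrow> tau t i \<in> measurable M (count_space UNIV)"
    and s_rv: "\<And>t i. i \<in> {1..n} \<Longrightarrow> s t i \<in> measurable M (count_space UNIV)"
    and tau_unif: "\<And>t i. i \<in> {1..n} \<Longrightarrow>
                 distr M (count_space UNIV) (tau t i) = measure_pmf (pmf_of_set {1..m})"
    and s_unif: "\<And>t i. i \<in> {1..n} \<Longrightarrow>
                 distr M (count_space UNIV) (s t i) = measure_pmf (pmf_of_set {1..m})"
    and indep_samples: "indep_vars (\<lambda>_. count_space UNIV)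
                 (\<lambda>c. case c of Inl (t, i) \<Rightarrow> tau t i | Inr (t, i) \<Rightarrow> s t i)
                 ({(t, i). i \<in> {1..n}} <+> {(t, i). i \<in> {1..n}})"
begin

definition sample :: "(nat \<times> nat) + (nat \<times> nat) \<Rightarrow> 'a \<Rightarrow> nat" where
  "sample c = (case c of Inl (t, i) \<Rightarrow> tau t i | Inr (t, i) \<Rightarrow> s t i)"

definition samples_at :: "nat set \<Rightarrow> ((nat \<times> nat) + (nat \<times> nat)) set" where
  "samples_at T = (T \<times> {1..n}) <+> (T \<times> {1..n})"

definition sample_events :: "(nat \<times> nat) + (nat \<times> nat) \<Rightarrow> 'a set set" where
  "sample_events c = {sample c -` B \<inter> space M | B. True}"

definition current_samples :: "nat \<Rightarrow> 'a \<Rightarrow> (nat \<Rightarrow> nat) \<times> (nat \<Rightarrow> nat)" where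
  "current_samples k \<omega> = (restrict (\<lambda>i. tau k i \<omega>) {1..n}, restrict (\<lambda>i. s k i \<omega>) {1..n})"

lemma sample_measurable: "c \<in> samples_at T \<Longrightarrow> sample c \<in> measurable M (count_space UNIV)"
  using tau_rv s_rv by (auto simp: sample_def samples_at_def)

lemma indep_sample_events: "indep_sets sample_events (samples_at UNIV)"
proof -
  have "{(t, i). i \<in> {1..n}} = (UNIV \<times> {1..n} :: (nat \<times> nat) set)" by auto
  then show ?thesis
    using indep_samples unfolding indep_vars_def2 sample_events_def sample_def samples_at_def
    by simp
qed

lemma indep_set_past_current:
  "indep_set (sigma_sets (space M) (\<Union>c\<in>samples_at {..<k}. sample_events c))
             (sigma_sets (space M) (\<Union>c\<in>samples_at {k}. sample_events c))"
proof -
  define I where "I j = (if j then samples_at {..<k} else samples_at {k})" for j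
  have "indep_sets sample_events (\<Union>j. I j)"
    by (rule indep_sets_mono_index[OF _ indep_sample_events]) (auto simp: I_def samples_at_def)
  moreover have "Int_stable (sample_events c)" for c
  proof (rule Int_stableI)
    fix a b assume "a \<in> sample_events c" "b \<in> sample_events c"
    then obtain A B where "a = sample c -` A \<inter> space M" "b = sample c -` B \<inter> space M"
      unfolding sample_events_def by auto
    then have "a \<inter> b = sample c -` (A \<inter> B) \<inter> space M" by auto
    then show "a \<inter> b \<in> sample_events c" unfolding sample_events_def by blast
  qed
  moreover have "disjoint_family_on I UNIV"
    unfolding disjoint_family_on_def I_def samples_at_def by auto
  ultimately have "indep_sets (\<lambda>j. sigma_sets (space M) (\<Union>c\<in>I j. sample_events c)) UNIV"
    by (rule indep_sets_collect_sigma)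
  moreover have "(\<lambda>j. sigma_sets (space M) (\<Union>c\<in>I j. sample_events c))
      = case_bool (sigma_sets (space M) (\<Union>c\<in>samples_at {..<k}. sample_events c))
                  (sigma_sets (space M) (\<Union>c\<in>samples_at {k}. sample_events c))"
    by (rule ext) (simp add: I_def split: bool.split)
  ultimately show ?thesis unfolding indep_set_def by simp
qed

lemma sets_filt_samples: "sets (filt M tau s n k) = sigma_sets (space M) (\<Union>c\<in>samples_at {..<k}. sample_events c)"
proof -
  have "(\<Union>c\<in>samples_at {..<k}. sample_events c)
      = (\<Union>t\<in>{..<k}. \<Union>i\<in>{1..n}. sample_events (Inl (t, i)) \<union> sample_events (Inr (t, i)))"
    unfolding samples_at_def by blast
  then show ?thesis by (simp add: sets_filt sample_events_def sample_def)
qed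

definition past_samples :: "nat \<Rightarrow> 'a \<Rightarrow> (nat \<times> nat \<Rightarrow> nat) \<times> (nat \<times> nat \<Rightarrow> nat)" where
  "past_samples k \<omega> = (restrict (\<lambda>c. tau (fst c) (snd c) \<omega>) ({..<k} \<times> {1..n}),
                        restrict (\<lambda>c. s (fst c) (snd c) \<omega>) ({..<k} \<times> {1..n}))"

lemma ball_samples_at:
  "(\<forall>c\<in>samples_at T. P c) \<longleftrightarrow> (\<forall>t\<in>T. \<forall>i\<in>{1..n}. P (Inl (t, i)) \<and> P (Inr (t, i)))"
  by (auto simp: samples_at_def)

lemma finite_samples_at [simp]: "finite T \<Longrightarrow> finite (samples_at T)"
  by (simp add: samples_at_def)

lemma samples_at_nonempty: "samples_at {k} \<noteq> {}"
  using n_pos by (auto simp: samples_at_def)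

lemma current_samples_eq_INT:
  assumes "q \<in> PiE {1..n} (\<lambda>_. {1..m}) \<times> PiE {1..n} (\<lambda>_. {1..m})"
  shows "{\<omega>\<in>space M. current_samples k \<omega> = q}
       = (\<Inter>c\<in>samples_at {k}. sample c -` {case c of Inl (t, i) \<Rightarrow> fst q i | Inr (t, i) \<Rightarrow> snd q i} \<inter> space M)"
    (is "_ = (\<Inter>c\<in>_. sample c -` {?v c} \<inter> _)")
proof (rule set_eqI)
  fix \<omega>
  have cur: "current_samples k \<omega> = q \<longleftrightarrow> (\<forall>i\<in>{1..n}. tau k i \<omega> = fst q i \<and> s k i \<omega> = snd q i)"
    using assms by (auto simp: current_samples_def fun_eq_iff PiE_def extensional_def restrict_def)
  have all: "(\<forall>c\<in>samples_at {k}. sample c \<omega> = ?v c) \<longleftrightarrow> (\<forall>i\<in>{1..n}. tau k i \<omega> = fst q i \<and> s k i \<omega> = snd q i)"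
    by (simp add: ball_samples_at sample_def)
  from samples_at_nonempty have "\<omega> \<in> (\<Inter>c\<in>samples_at {k}. sample c -` {?v c} \<inter> space M)
      \<longleftrightarrow> \<omega> \<in> space M \<and> (\<forall>c\<in>samples_at {k}. sample c \<omega> = ?v c)"
    by blast
  then show "\<omega> \<in> {\<omega>\<in>space M. current_samples k \<omega> = q} \<longleftrightarrow> \<omega> \<in> (\<Inter>c\<in>samples_at {k}. sample c -` {?v c} \<inter> space M)"
    using all cur by blast
qed

lemma sets_current_samples:
  assumes "q \<in> PiE {1..n} (\<lambda>_. {1..m}) \<times> PiE {1..n} (\<lambda>_. {1..m})"
  shows "{\<omega>\<in>space M. current_samples k \<omega> = q} \<in> sets M"
  unfolding current_samples_eq_INT[OF assms]
  by (intro sets.finite_INT samples_at_nonempty measurable_sets[OF sample_measurable]) simp_all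

lemma current_samples_in_sigma:
  assumes "q \<in> PiE {1..n} (\<lambda>_. {1..m}) \<times> PiE {1..n} (\<lambda>_. {1..m})"
  shows "{\<omega>\<in>space M. current_samples k \<omega> = q} \<in> sigma_sets (space M) (\<Union>c\<in>samples_at {k}. sample_events c)"
proof -
  interpret S: sigma_algebra "space M" "sigma_sets (space M) (\<Union>c\<in>samples_at {k}. sample_events c)"
    by (rule sigma_algebra_sigma_sets) (auto simp: sample_events_def)
  have "sample c -` {v} \<inter> space M \<in> sigma_sets (space M) (\<Union>c\<in>samples_at {k}. sample_events c)"
    if "c \<in> samples_at {k}" for c v
    by (rule sigma_sets.Basic) (use that in \<open>unfold sample_events_def, blast\<close>)
  then show ?thesis unfolding current_samples_eq_INT[OF assms]
    by (intro S.finite_INT samples_at_nonempty) simp_all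
qed

lemma prob_current_samples:
  assumes q: "q \<in> PiE {1..n} (\<lambda>_. {1..m}) \<times> PiE {1..n} (\<lambda>_. {1..m})"
  shows "prob {\<omega>\<in>space M. current_samples k \<omega> = q}
       = 1 / real (card (PiE {1..n} (\<lambda>_. {1..m}) \<times> PiE {1..n} (\<lambda>_. {1..m::nat})))"
proof -
  let ?v = "\<lambda>c. case c of Inl (t, i) \<Rightarrow> fst q i | Inr (t, i) \<Rightarrow> snd q i"
  have card_samples: "card (samples_at {k}) = 2 * n"
    by (simp add: samples_at_def card_Plus card_cartesian_product)
  have "prob {\<omega>\<in>space M. current_samples k \<omega> = q} = (\<Prod>c\<in>samples_at {k}. prob (sample c -` {?v c} \<inter> space M))"
    unfolding current_samples_eq_INT[OF q]
    by (rule indep_setsD[OF indep_sample_events _ samples_at_nonempty]) (auto simp: samples_at_def sample_events_def)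
  also have "\<dots> = (\<Prod>c\<in>samples_at {k}. 1 / real m)"
  proof (rule prod.cong[OF refl])
    fix c assume "c \<in> samples_at {k}"
    then obtain i where i: "i \<in> {1..n}" and "c = Inl (k, i) \<or> c = Inr (k, i)"
      unfolding samples_at_def by auto
    moreover have "fst q i \<in> {1..m}" "snd q i \<in> {1..m}" using q i by auto
    ultimately show "prob (sample c -` {?v c} \<inter> space M) = 1 / real m"
      using measure_uniform_sample[OF tau_rv tau_unif m_pos] measure_uniform_sample[OF s_rv s_unif m_pos] i
      by (auto simp: sample_def)
  qed
  finally show ?thesis using card_samples
    by (simp add: card_cartesian_product card_PiE power_mult_distrib power_divide mult_2 power_add)
qed

lemma measure_Int_current_samples:
  assumes A: "A \<in> sets (filt M tau s n k)"
    and q: "q \<in> PiE {1..n} (\<lambda>_. {1..m}) \<times> PiE {1..n} (\<lambda>_. {1..m})"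
  shows "measure M (A \<inter> {\<omega>\<in>space M. current_samples k \<omega> = q})
       = measure M A * (1 / real (card (PiE {1..n} (\<lambda>_. {1..m}) \<times> PiE {1..n} (\<lambda>_. {1..m::nat}))))"
  using indep_setD[OF indep_set_past_current A[unfolded sets_filt_samples] current_samples_in_sigma[OF q]]
  by (simp add: prob_current_samples[OF q])

lemma AE_samples_range: "AE \<omega> in M. \<forall>c\<in>samples_at {..k}. sample c \<omega> \<in> {1..m}"
proof (rule AE_finite_allI)
  fix c assume "c \<in> samples_at {..k}"
  then obtain t i where i: "i \<in> {1..n}" and "c = Inl (t, i) \<or> c = Inr (t, i)"
    unfolding samples_at_def by auto
  then show "AE \<omega> in M. sample c \<omega> \<in> {1..m}"
    using AE_uniform_sample_range[OF tau_rv tau_unif m_pos] AE_uniform_sample_range[OF s_rv s_unif m_pos]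
    by (auto simp: sample_def)
qed simp

lemma AE_current_samples_range:
  "AE \<omega> in M. current_samples k \<omega> \<in> PiE {1..n} (\<lambda>_. {1..m}) \<times> PiE {1..n} (\<lambda>_. {1..m})"
  using AE_samples_range[of k]
  by eventually_elim (auto simp: current_samples_def ball_samples_at sample_def)

lemma measurable_past_samples_comp:
  fixes g :: "(nat \<times> nat \<Rightarrow> nat) \<times> (nat \<times> nat \<Rightarrow> nat) \<Rightarrow> real"
  shows "(\<lambda>\<omega>. g (past_samples k \<omega>)) \<in> borel_measurable (filt M tau s n k)"
proof (rule measurable_countable_range_comp[where U="past_samples k"])
  let ?D = "{..<k} \<times> {1..n}"
  have "past_samples k ` space (filt M tau s n k) \<subseteq> PiE ?D (\<lambda>_. UNIV) \<times> PiE ?D (\<lambda>_. UNIV)"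
    by (simp add: past_samples_def image_subset_iff restrict_PiE_iff)
  moreover have "countable (PiE ?D (\<lambda>_. UNIV :: nat set) \<times> PiE ?D (\<lambda>_. UNIV :: nat set))"
    by (intro countable_SIGMA countable_PiE) auto
  ultimately show "countable (past_samples k ` space (filt M tau s n k))"
    by (rule countable_subset)
  fix p assume "p \<in> past_samples k ` space (filt M tau s n k)"
  then obtain \<omega>0 where p: "p = past_samples k \<omega>0" by auto
  have "{\<omega>\<in>space (filt M tau s n k). past_samples k \<omega> = p}
      = {\<omega>\<in>space (filt M tau s n k). \<forall>c\<in>?D. tau (fst c) (snd c) \<omega> = tau (fst c) (snd c) \<omega>0
                                            \<and> s (fst c) (snd c) \<omega> = s (fst c) (snd c) \<omega>0}"
    unfolding p past_samples_def by (auto simp: restrict_def fun_eq_iff)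
  also have "\<dots> \<in> sets (filt M tau s n k)"
  proof (rule sets.sets_Collect_finite_All)
    fix c assume c: "c \<in> ?D"
    have "{\<omega>\<in>space (filt M tau s n k). tau (fst c) (snd c) \<omega> = tau (fst c) (snd c) \<omega>0 \<and> s (fst c) (snd c) \<omega> = s (fst c) (snd c) \<omega>0}
        = (tau (fst c) (snd c) -` {tau (fst c) (snd c) \<omega>0} \<inter> space (filt M tau s n k))
          \<inter> (s (fst c) (snd c) -` {s (fst c) (snd c) \<omega>0} \<inter> space (filt M tau s n k))"
      by auto
    also have "\<dots> \<in> sets (filt M tau s n k)"
      using c by (intro sets.Int measurable_sets[OF measurable_filt(1)] measurable_sets[OF measurable_filt(2)]) auto
    finally show "{\<omega>\<in>space (filt M tau s n k). tau (fst c) (snd c) \<omega> = tau (fst c) (snd c) \<omega>0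
        \<and> s (fst c) (snd c) \<omega> = s (fst c) (snd c) \<omega>0} \<in> sets (filt M tau s n k)" .
  qed simp
  finally show "{\<omega>\<in>space (filt M tau s n k). past_samples k \<omega> = p} \<in> sets (filt M tau s n k)" .
qed

lemma gt_saga_nodes_agree_past_samples:
  "nodes_agree n (gt_saga W df n m \<alpha> x0 (\<lambda>t i. tau t i \<omega>) (\<lambda>t i. s t i \<omega>) k)
     (gt_saga W df n m \<alpha> x0 (\<lambda>t i. fst (past_samples k \<omega>) (t, i)) (\<lambda>t i. snd (past_samples k \<omega>) (t, i)) k)"
  by (rule gt_saga_nodes_agree) (auto simp: past_samples_def)

lemma measurable_gt_saga_fun:
  fixes h :: "'v::real_normed_vector saga_state \<Rightarrow> real"
  assumes h: "\<And>st st'. nodes_agree n st st' \<Longrightarrow> h st = h st'"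
  shows "(\<lambda>\<omega>. h (gt_saga W df n m \<alpha> x0 (\<lambda>t i. tau t i \<omega>) (\<lambda>t i. s t i \<omega>) k)) \<in> borel_measurable (filt M tau s n k)"
  using measurable_past_samples_comp[of "\<lambda>u. h (gt_saga W df n m \<alpha> x0 (\<lambda>t i. fst u (t, i)) (\<lambda>t i. snd u (t, i)) k)" k]
  by (simp add: h[OF gt_saga_nodes_agree_past_samples])

text \<open>Almost surely the state after \<open>k\<close> steps is one of finitely many values, so every
  real function of it is bounded, hence integrable.\<close>
lemma integrable_gt_saga_fun:
  fixes h :: "'v::real_normed_vector saga_state \<Rightarrow> real"
  assumes h: "\<And>st st'. nodes_agree n st st' \<Longrightarrow> h st = h st'"
  shows "integrable M (\<lambda>\<omega>. h (gt_saga W df n m \<alpha> x0 (\<lambda>t i. tau t i \<omega>) (\<lambda>t i. s t i \<omega>) k))"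
proof -
  define D where "D = {..<k} \<times> {1..n}"
  define SU where "SU = PiE D (\<lambda>_. {1..m}) \<times> PiE D (\<lambda>_. {1..m})"
  define dec where "dec u = h (gt_saga W df n m \<alpha> x0 (\<lambda>t i. fst u (t, i)) (\<lambda>t i. snd u (t, i)) k)" for u
  have SU: "finite SU" by (simp add: SU_def D_def finite_PiE)
  have "AE \<omega> in M. past_samples k \<omega> \<in> SU"
    using AE_samples_range[of k]
    by eventually_elim (auto simp: SU_def D_def past_samples_def ball_samples_at sample_def)
  then have "AE \<omega> in M. norm (h (gt_saga W df n m \<alpha> x0 (\<lambda>t i. tau t i \<omega>) (\<lambda>t i. s t i \<omega>) k)) \<le> (\<Sum>u\<in>SU. \<bar>dec u\<bar>)"
  proof eventually_elim
    case (elim \<omega>)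
    then show ?case
      using member_le_sum[OF elim _ SU, of "\<lambda>u. \<bar>dec u\<bar>"]
      by (simp add: dec_def h[OF gt_saga_nodes_agree_past_samples])
  qed
  moreover have "(\<lambda>\<omega>. h (gt_saga W df n m \<alpha> x0 (\<lambda>t i. tau t i \<omega>) (\<lambda>t i. s t i \<omega>) k)) \<in> borel_measurable M"
    using measurable_from_subalg[OF subalgebra_filt[OF tau_rv s_rv] measurable_gt_saga_fun[where h=h, OF h]] .
  ultimately show ?thesis by (intro integrable_const_bound)
qed

lemma real_cond_exp_gt_saga_Suc:
  fixes h :: "'v::real_normed_vector saga_state \<Rightarrow> real"
  assumes h: "\<And>st st'. nodes_agree n st st' \<Longrightarrow> h st = h st'"
  shows "AE \<omega> in M. real_cond_exp M (filt M tau s n k)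
            (\<lambda>\<omega>. h (gt_saga W df n m \<alpha> x0 (\<lambda>t i. tau t i \<omega>) (\<lambda>t i. s t i \<omega>) (Suc k))) \<omega>
       = (\<Sum>q\<in>PiE {1..n} (\<lambda>_. {1..m}) \<times> PiE {1..n} (\<lambda>_. {1..m}).
            h (saga_step W df n m \<alpha> (gt_saga W df n m \<alpha> x0 (\<lambda>t i. tau t i \<omega>) (\<lambda>t i. s t i \<omega>) k) (fst q) (snd q)))
         / real (card (PiE {1..n} (\<lambda>_. {1..m}) \<times> PiE {1..n} (\<lambda>_. {1..m::nat})))"
proof -
  let ?Q = "PiE {1..n} (\<lambda>_. {1..m}) \<times> PiE {1..n} (\<lambda>_. {1..m::nat})"
  let ?st = "\<lambda>k \<omega>. gt_saga W df n m \<alpha> x0 (\<lambda>t i. tau t i \<omega>) (\<lambda>t i. s t i \<omega>) k"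
  have sub: "subalgebra M (filt M tau s n k)" by (rule subalgebra_filt[OF tau_rv s_rv])
  interpret F: sigma_finite_subalgebra M "filt M tau s n k"
    by (rule finite_measure_subalgebra_is_sigma_finite)
       (simp add: finite_measure_subalgebra_def finite_measure_subalgebra_axioms_def finite_measure_axioms sub)
  have h_step: "h (saga_step W df n m \<alpha> st (fst q) (snd q)) = h (saga_step W df n m \<alpha> st' (fst q) (snd q))"
    if "nodes_agree n st st'" for st st' q
    by (rule h[OF saga_step_nodes_agree[OF that]]) simp
  have T_eq: "h (?st (Suc k) \<omega>) = h (saga_step W df n m \<alpha> (?st k \<omega>) (fst (current_samples k \<omega>)) (snd (current_samples k \<omega>)))"
    for \<omega> unfolding gt_saga_Suc_step
    by (rule h[OF saga_step_nodes_agree[OF nodes_agree_refl]]) (simp add: current_samples_def)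
  have T_meas: "(\<lambda>\<omega>. h (?st (Suc k) \<omega>)) \<in> borel_measurable M"
    using measurable_from_subalg[OF subalgebra_filt[OF tau_rv s_rv] measurable_gt_saga_fun[where h=h, OF h]] .
  have G_meas: "(\<lambda>\<omega>. h (saga_step W df n m \<alpha> (?st k \<omega>) (fst q) (snd q))) \<in> borel_measurable (filt M tau s n k)"
    and G_int: "integrable M (\<lambda>\<omega>. h (saga_step W df n m \<alpha> (?st k \<omega>) (fst q) (snd q)))" for q
    using measurable_gt_saga_fun[where h="\<lambda>st. h (saga_step W df n m \<alpha> st (fst q) (snd q))", OF h_step]
      integrable_gt_saga_fun[where h="\<lambda>st. h (saga_step W df n m \<alpha> st (fst q) (snd q))", OF h_step]
    by simp_all
  have "AE \<omega> in M. real_cond_exp M (filt M tau s n k) (\<lambda>\<omega>. h (?st (Suc k) \<omega>)) \<omega>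
      = (\<Sum>q\<in>?Q. 1 / real (card ?Q) * h (saga_step W df n m \<alpha> (?st k \<omega>) (fst q) (snd q)))"
    by (rule F.real_cond_exp_indep_index[where V="current_samples k" and p="\<lambda>_. 1 / real (card ?Q)"
          and G="\<lambda>q \<omega>. h (saga_step W df n m \<alpha> (?st k \<omega>) (fst q) (snd q))",
          OF prob_space_axioms _ sets_current_samples AE_current_samples_range measure_Int_current_samples
          G_meas G_int T_meas T_eq])
      (simp_all add: finite_PiE)
  then show ?thesis
    by eventually_elim (simp add: sum_divide_distrib)
qed

end

theorem lemma19:
  fixes M :: "'a measure"
    and n m :: nat and L \<alpha> :: real
    and f :: "nat \<Rightarrow> nat \<Rightarrow> 'v::euclidean_space \<Rightarrow> real"
    and df :: "nat \<Rightarrow> nat \<Rightarrow> 'v \<Rightarrow> 'v"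
    and W :: "nat \<Rightarrow> nat \<Rightarrow> real"
    and x0 :: 'v
    and tau s :: "nat \<Rightarrow> nat \<Rightarrow> 'a \<Rightarrow> nat"
    and F :: "'v \<Rightarrow> real"
    and k :: nat
  assumes n: "n \<ge> 1" and m: "m \<ge> 1" and L: "L > 0"
    and grad: "\<And>i j x. i \<in> {1..n} \<Longrightarrow> j \<in> {1..m} \<Longrightarrow>
                 (f i j has_derivative (\<lambda>h. df i j x \<bullet> h)) (at x)"
    and smooth: "\<And>i j x y. i \<in> {1..n} \<Longrightarrow> j \<in> {1..m} \<Longrightarrow>
                 norm (df i j x - df i j y) \<le> L * norm (x - y)"
    and F_def: "F = (\<lambda>x. (1 / real n) * (\<Sum>i\<in>{1..n}. (1 / real m) * (\<Sum>j\<in>{1..m}. f i j x)))"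
    and F_bdd: "bdd_below (range F)"
    and W_ds: "doubly_stochastic W n" and W_prim: "primitive W n"
    and prob: "prob_space M"
    and tau_rv: "\<And>t i. i \<in> {1..n} \<Longrightarrow> tau t i \<in> measurable M (count_space UNIV)"
    and s_rv: "\<And>t i. i \<in> {1..n} \<Longrightarrow> s t i \<in> measurable M (count_space UNIV)"
    and tau_unif: "\<And>t i. i \<in> {1..n} \<Longrightarrow>
                 distr M (count_space UNIV) (tau t i) = measure_pmf (pmf_of_set {1..m})"
    and s_unif: "\<And>t i. i \<in> {1..n} \<Longrightarrow>
                 distr M (count_space UNIV) (s t i) = measure_pmf (pmf_of_set {1..m})"
    and indep: "prob_space.indep_vars M (\<lambda>_. count_space UNIV)
                 (\<lambda>c. case c of Inl (t, i) \<Rightarrow> tau t i | Inr (t, i) \<Rightarrow> s t i)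
                 ({(t, i). i \<in> {1..n}} <+> {(t, i). i \<in> {1..n}})"
    and \<alpha>_pos: "\<alpha> > 0"
    and \<alpha>_le: "\<alpha> \<le> sqrt (real n) / (sqrt (8 * real m) * L)"
  shows "AE \<omega> in M.
     real_cond_exp M (filt M tau s n k)
       (\<lambda>\<omega>. tval n m (gt_x W df n m \<alpha> x0 (\<lambda>t i. tau t i \<omega>) (\<lambda>t i. s t i \<omega>) (Suc k))
                       (gt_z W df n m \<alpha> x0 (\<lambda>t i. tau t i \<omega>) (\<lambda>t i. s t i \<omega>) (Suc k))) \<omega>
     \<le> (1 - 1 / (4 * real m)) *
         tval n m (gt_x W df n m \<alpha> x0 (\<lambda>t i. tau t i \<omega>) (\<lambda>t i. s t i \<omega>) k)
                  (gt_z W df n m \<alpha> x0 (\<lambda>t i. tau t i \<omega>) (\<lambda>t i. s t i \<omega>) k)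
       + 16 * real m * \<alpha>\<^sup>2 * L *
         (F (avg n (gt_x W df n m \<alpha> x0 (\<lambda>t i. tau t i \<omega>) (\<lambda>t i. s t i \<omega>) k)) - (INF x. F x))
       + (8 * real m * \<alpha>\<^sup>2 * L\<^sup>2 + 9 / (4 * real m)) * (1 / real n) *
         cons_err n (gt_x W df n m \<alpha> x0 (\<lambda>t i. tau t i \<omega>) (\<lambda>t i. s t i \<omega>) k)"
proof -
  interpret saga_sampling M n m tau s
    using prob n m tau_rv s_rv tau_unif s_unif indep
    by (simp add: saga_sampling_def saga_sampling_axioms_def)
  interpret smooth_sum_objective n m L f df F
    using n m L grad smooth F_def by (simp add: smooth_sum_objective_def)
  \<comment> \<open>Only the column sums of \<open>W\<close> enter.\<close>
  have col: "\<forall>r\<in>{1..n}. (\<Sum>i\<in>{1..n}. W i r) = 1"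
    using W_ds by (simp add: doubly_stochastic_def)
  let ?st = "\<lambda>k \<omega>. gt_saga W df n m \<alpha> x0 (\<lambda>t i. tau t i \<omega>) (\<lambda>t i. s t i \<omega>) k"
  let ?t = "\<lambda>st. tval n m (fst st) (snd (snd (snd st)))"
  let ?Q = "PiE {1..n} (\<lambda>_. {1..m}) \<times> PiE {1..n} (\<lambda>_. {1..m::nat})"
  have "AE \<omega> in M. real_cond_exp M (filt M tau s n k) (\<lambda>\<omega>. ?t (?st (Suc k) \<omega>)) \<omega>
      = (\<Sum>q\<in>?Q. ?t (saga_step W df n m \<alpha> (?st k \<omega>) (fst q) (snd q))) / real (card ?Q)"
    by (rule real_cond_exp_gt_saga_Suc) (rule tval_nodes_agree)
  then show ?thesis
  proof eventually_elim
    case (elim \<omega>)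
    then show ?case
      using mean_tval_gt_saga_step_le[OF col F_bdd \<alpha>_pos \<alpha>_le, of x0 "\<lambda>t i. tau t i \<omega>" "\<lambda>t i. s t i \<omega>" k]
      by (simp add: gt_x_def gt_z_def)
  qed
qed

end
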